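(* Let $G=(V,E)$ be a finite graph with couplings $J_e>0$ and $t_e=\tanh(J_e)$. Fix $A,B\subset V$ with $|A|,|B|$ even. Let $\Omega=\{0,1\}^E$, $\Sigma=\{F\subset E\mid \partial F=A\}$, $f:\Omega\to2^\Sigma$, $f(\omega)=\{F\subset\omega\mid\partial F=A\}$, and $$\rho[\omega]\propto \mathbf{1}[\omega\in\mathcal{F}_A]\,(\ell^{A\triangle B}_t\cup\mathbb{P}_{t^2})[\omega]\ (\omega\in\Omega),\qquad\gamma[\eta]\propto1\ (\eta\in\Sigma).$$ Let $\mathscr{P}$ be the probability measure on $\Omega\times\Sigma$ with $\mathscr{P}[\omega,\eta]\propto\rho[\omega]\gamma[\eta]\mathbf{1}[\eta\in f(\omega)]$. Then: (a) The marginal of $\mathscr{P}$ on $\Sigma$ is $\ell^A_t$. For each $\omega\in\mathcal{F}_A\cap\mathcal{F}_B$, the conditional measure $\mathscr{P}[\cdot\mid\omega]$ is the uniform measure on $\{F\subset\omega\mid\partial F=A\}$. (b) The marginal of $\mathscr{P}$ on $\Omega$ is the double random current $\mathbf{P}^{A,B}_J$. For each $\eta\in\Sigma$, the conditional measure $\mathscr{P}[\cdot\mid\eta]$ is $\ell^B_t\cup\mathbb{P}_{t^2}\cup\delta_\eta$. In particular, the uniform subgraph with sources $A$ of a sample of the double random current with sources $A$ and $B$ has law $\ell^A_t$.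
   Context: Configurations $\omega\in\{0,1\}^E$ are identified with their sets of open edges. For $F\subset E$, $\partial F$ is the set of vertices of odd degree in $(V,F)$; $\mathcal{F}_A=\{\omega\subset E\mid\exists F\subset\omega,\ \partial F=A\}$. For positive weights $x=(x_e)$, $\ell^C_x[\omega]\propto\prod_{e\in\omega}x_e\,\mathbf{1}[\partial\omega=C]$ (loop $\mathrm{O}(1)$ model with sources $C$). $\mathbb{P}_{t^2}$ is Bernoulli percolation on $E$ with edge $e$ open independently with probability $t_e^2$; $\delta_\eta$ is the Dirac mass at $\eta$. For measures $\pi,\nu$ on $\{0,1\}^E$, $\pi\cup\nu$ is the law of the union of the open edges of independent samples of $\pi$ and $\nu$. The single random current $\mathbf{P}^C_J$ is the law of $\{e:n_e>0\}$ where $(n_e)$ are independent Poisson$(J_e)$ conditioned on the set of vertices $v$ with $\sum_{e\ni v}n_e$ odd being $C$; the double random current $\mathbf{P}^{A,B}_J$ is the law of the union of independent samples of $\mathbf{P}^A_J$ and $\mathbf{P}^B_J$. *)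

theory Defs
  imports "HOL-Analysis.Analysis"
begin

text \<open>Graph: vertex set V, edge set E of two-element subsets of V.
  Configurations are subsets of E; measures on configurations are
  represented by their probability mass functions  'v set set => real.\<close>

definition simple_graph :: "'v set \<Rightarrow> 'v set set \<Rightarrow> bool" where
  "simple_graph V E \<longleftrightarrow> finite V \<and> (\<forall>e\<in>E. e \<subseteq> V \<and> card e = 2)"

definition bdry :: "'v set set \<Rightarrow> 'v set" where
  "bdry F = {v. odd (card {e\<in>F. v \<in> e})}"

definition FF :: "'v set set \<Rightarrow> 'v set \<Rightarrow> 'v set set set" where
  "FF E A = {\<omega>. \<omega> \<subseteq> E \<and> (\<exists>F. F \<subseteq> \<omega> \<and> bdry F = A)}"

definition symd :: "'a set \<Rightarrow> 'a set \<Rightarrow> 'a set" where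
  "symd A B = (A - B) \<union> (B - A)"

definition loopO1 :: "'v set set \<Rightarrow> ('v set \<Rightarrow> real) \<Rightarrow> 'v set \<Rightarrow> 'v set set \<Rightarrow> real" where
  "loopO1 E x C \<omega> =
     (if \<omega> \<subseteq> E \<and> bdry \<omega> = C then (\<Prod>e\<in>\<omega>. x e) else 0) /
     (\<Sum>\<omega>'\<in>Pow E. if bdry \<omega>' = C then (\<Prod>e\<in>\<omega>'. x e) else 0)"

definition perc :: "'v set set \<Rightarrow> ('v set \<Rightarrow> real) \<Rightarrow> 'v set set \<Rightarrow> real" where
  "perc E p \<omega> = (if \<omega> \<subseteq> E then (\<Prod>e\<in>\<omega>. p e) * (\<Prod>e\<in>E - \<omega>. 1 - p e) else 0)"

definition dirac :: "'v set set \<Rightarrow> 'v set set \<Rightarrow> real" where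
  "dirac \<eta> \<omega> = (if \<omega> = \<eta> then 1 else 0)"

definition munion :: "'v set set \<Rightarrow> ('v set set \<Rightarrow> real) \<Rightarrow> ('v set set \<Rightarrow> real) \<Rightarrow> 'v set set \<Rightarrow> real" where
  "munion E \<pi> \<nu> \<omega> = (\<Sum>\<alpha>\<in>Pow E. \<Sum>\<beta>\<in>Pow E. if \<alpha> \<union> \<beta> = \<omega> then \<pi> \<alpha> * \<nu> \<beta> else 0)"

definition currents :: "'v set set \<Rightarrow> ('v set \<Rightarrow> nat) set" where
  "currents E = {n. \<forall>e. e \<notin> E \<longrightarrow> n e = 0}"

definition csrc :: "'v set set \<Rightarrow> ('v set \<Rightarrow> nat) \<Rightarrow> 'v set" where
  "csrc E n = {v. odd (\<Sum>e\<in>{e\<in>E. v \<in> e}. n e)}"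

definition poisson_weight :: "'v set set \<Rightarrow> ('v set \<Rightarrow> real) \<Rightarrow> ('v set \<Rightarrow> nat) \<Rightarrow> real" where
  "poisson_weight E J n = (\<Prod>e\<in>E. exp (- J e) * J e ^ n e / fact (n e))"

definition single_current :: "'v set set \<Rightarrow> ('v set \<Rightarrow> real) \<Rightarrow> 'v set \<Rightarrow> 'v set set \<Rightarrow> real" where
  "single_current E J C \<omega> =
     (\<Sum>\<^sub>\<infinity>n\<in>{n\<in>currents E. csrc E n = C \<and> {e\<in>E. n e > 0} = \<omega>}. poisson_weight E J n) /
     (\<Sum>\<^sub>\<infinity>n\<in>{n\<in>currents E. csrc E n = C}. poisson_weight E J n)"

definition double_current :: "'v set set \<Rightarrow> ('v set \<Rightarrow> real) \<Rightarrow> 'v set \<Rightarrow> 'v set \<Rightarrow> 'v set set \<Rightarrow> real" where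
  "double_current E J A B = munion E (single_current E J A) (single_current E J B)"

definition SigmaA :: "'v set set \<Rightarrow> 'v set \<Rightarrow> 'v set set set" where
  "SigmaA E A = {F. F \<subseteq> E \<and> bdry F = A}"

definition fsub :: "'v set \<Rightarrow> 'v set set \<Rightarrow> 'v set set set" where
  "fsub A \<omega> = {F. F \<subseteq> \<omega> \<and> bdry F = A}"

definition rho_unnorm :: "'v set set \<Rightarrow> ('v set \<Rightarrow> real) \<Rightarrow> 'v set \<Rightarrow> 'v set \<Rightarrow> 'v set set \<Rightarrow> real" where
  "rho_unnorm E t A B \<omega> = (if \<omega> \<in> FF E A
      then munion E (loopO1 E t (symd A B)) (perc E (\<lambda>e. (t e)\<^sup>2)) \<omega> else 0)"

definition rho :: "'v set set \<Rightarrow> ('v set \<Rightarrow> real) \<Rightarrow> 'v set \<Rightarrow> 'v set \<Rightarrow> 'v set set \<Rightarrow> real" where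
  "rho E t A B \<omega> = rho_unnorm E t A B \<omega> / (\<Sum>\<omega>'\<in>Pow E. rho_unnorm E t A B \<omega>')"

definition gamma :: "'v set set \<Rightarrow> 'v set \<Rightarrow> 'v set set \<Rightarrow> real" where
  "gamma E A \<eta> = (if \<eta> \<in> SigmaA E A then 1 / real (card (SigmaA E A)) else 0)"

definition joint_unnorm :: "'v set set \<Rightarrow> ('v set \<Rightarrow> real) \<Rightarrow> 'v set \<Rightarrow> 'v set \<Rightarrow> 'v set set \<Rightarrow> 'v set set \<Rightarrow> real" where
  "joint_unnorm E t A B \<omega> \<eta> =
     (if \<omega> \<subseteq> E \<and> \<eta> \<in> SigmaA E A \<and> \<eta> \<in> fsub A \<omega> then rho E t A B \<omega> * gamma E A \<eta> else 0)"

definition jointP :: "'v set set \<Rightarrow> ('v set \<Rightarrow> real) \<Rightarrow> 'v set \<Rightarrow> 'v set \<Rightarrow> 'v set set \<Rightarrow> 'v set set \<Rightarrow> real" where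
  "jointP E t A B \<omega> \<eta> = joint_unnorm E t A B \<omega> \<eta> /
     (\<Sum>\<omega>'\<in>Pow E. \<Sum>\<eta>'\<in>SigmaA E A. joint_unnorm E t A B \<omega>' \<eta>')"

end

theory Submission
  imports Defs
begin

(* Let W(\<omega>) be the sum, over \<delta> \<subseteq> \<omega> with boundary A \<triangle> B, of the product of t_e over \<delta>,
   t_e^2 over \<omega> - \<delta> and 1 - t_e^2 off \<omega>; it is Z_{A \<triangle> B} times the law of l^{A \<triangle> B}_t \<union> P_{t^2}.
   Hence P[\<omega>, \<eta>] = W(\<omega>) / (Z_A Z_B) when \<partial>\<eta> = A and \<eta> \<subseteq> \<omega>, and every claim follows from
   two identities for W.

   Switching \<delta> = \<eta> \<triangle> \<alpha> turns the sources A \<triangle> B into B and gives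
   W(\<omega>) = t^\<eta> Z_B (l^B_t \<union> P_{t^2} \<union> \<delta>_\<eta>)(\<omega>). This is the law of \<omega> given \<eta>, and summing over \<omega>
   shows that \<eta> has law l^A_t.

   Summing Poisson weights, the currents with odd edges \<alpha> and trace \<omega> have total weight
   exp (- \<Sum>J) times the product of sinh J_e over \<alpha> and cosh J_e - 1 over \<omega> - \<alpha>. Summing
   the product of two such weights over the pairs of traces with union \<omega> factorises over the
   edges, and each edge contributes cosh^2 J_e times its factor in W for \<alpha>_1 \<triangle> \<alpha>_2. Hence
   P^{A,B}_J(\<omega>) = |{F \<subseteq> \<omega>. \<partial>F = A}| W(\<omega>) / (Z_A Z_B), which is the marginal of \<omega>. *)

section \<open>Sums of products over intervals of sets\<close>

lemma sum_Pow_prod_if: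
  fixes f g :: "'a \<Rightarrow> 'b::comm_semiring_1"
  assumes "finite U" "D \<subseteq> U"
  shows "(\<Sum>Y\<in>Pow D. \<Prod>e\<in>U. if e \<in> Y then f e else g e)
       = (\<Prod>e\<in>U. if e \<in> D then f e + g e else g e)"
proof -
  have fD: "finite D" using assms finite_subset by blast
  have split: "(\<Prod>e\<in>U. h e) = (\<Prod>e\<in>U - D. h e) * (\<Prod>e\<in>D. h e)" for h :: "'a \<Rightarrow> 'b"
    using prod.subset_diff[OF assms(2,1)] .
  have "(\<Prod>e\<in>U. if e \<in> Y then f e else g e) = (\<Prod>e\<in>U - D. g e) * ((\<Prod>e\<in>Y. f e) * (\<Prod>e\<in>D - Y. g e))"
    if "Y \<subseteq> D" for Y
  proof -
    have "(\<Prod>e\<in>D. if e \<in> Y then f e else g e) = (\<Prod>e\<in>Y. f e) * (\<Prod>e\<in>D - Y. g e)"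
      using that by (simp add: prod.If_cases[OF fD] Int_absorb1 Diff_eq)
    moreover have "(\<Prod>e\<in>U - D. if e \<in> Y then f e else g e) = (\<Prod>e\<in>U - D. g e)"
      using that by (intro prod.cong) auto
    ultimately show ?thesis by (simp add: split[of "\<lambda>e. if e \<in> Y then f e else g e"])
  qed
  then have "(\<Sum>Y\<in>Pow D. \<Prod>e\<in>U. if e \<in> Y then f e else g e)
      = (\<Prod>e\<in>U - D. g e) * (\<Sum>Y\<in>Pow D. (\<Prod>e\<in>Y. f e) * (\<Prod>e\<in>D - Y. g e))"
    by (simp add: sum_distrib_left)
  also have "\<dots> = (\<Prod>e\<in>U - D. g e) * (\<Prod>e\<in>D. f e + g e)"
    by (simp add: prod_add[OF fD])
  also have "\<dots> = (\<Prod>e\<in>U. if e \<in> D then f e + g e else g e)"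
    by (simp add: split[of "\<lambda>e. if e \<in> D then f e + g e else g e"])
  finally show ?thesis .
qed

lemma sum_interval_prod_if:
  fixes f g :: "'a \<Rightarrow> 'b::comm_semiring_1"
  assumes "finite U" "L \<subseteq> M" "M \<subseteq> U"
  shows "(\<Sum>X | L \<subseteq> X \<and> X \<subseteq> M. \<Prod>e\<in>U. if e \<in> X then f e else g e)
       = (\<Prod>e\<in>U. if e \<in> L then f e else if e \<in> M then f e + g e else g e)"
proof -
  let ?g = "\<lambda>e. if e \<in> L then f e else g e"
  have interval: "{X. L \<subseteq> X \<and> X \<subseteq> M} = (\<union>) L ` Pow (M - L)"
  proof (intro equalityI subsetI)
    fix X assume "X \<in> {X. L \<subseteq> X \<and> X \<subseteq> M}"
    then have "X = L \<union> (X - L)" "X - L \<in> Pow (M - L)" by auto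
    then show "X \<in> (\<union>) L ` Pow (M - L)" by blast
  qed (use assms(2) in auto)
  have "inj_on ((\<union>) L) (Pow (M - L))"
    by (auto simp: inj_on_def)
  then have "(\<Sum>X | L \<subseteq> X \<and> X \<subseteq> M. \<Prod>e\<in>U. if e \<in> X then f e else g e)
      = (\<Sum>Y\<in>Pow (M - L). \<Prod>e\<in>U. if e \<in> Y then f e else ?g e)"
    unfolding interval by (simp add: sum.reindex) (auto intro!: sum.cong prod.cong)
  also have "\<dots> = (\<Prod>e\<in>U. if e \<in> M - L then f e + ?g e else ?g e)"
    using assms by (intro sum_Pow_prod_if) auto
  also have "\<dots> = (\<Prod>e\<in>U. if e \<in> L then f e else if e \<in> M then f e + g e else g e)"
    by (intro prod.cong) auto
  finally show ?thesis .
qed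

section \<open>Symmetric differences and boundaries\<close>

lemma mem_symd: "x \<in> symd A B \<longleftrightarrow> (x \<in> A) \<noteq> (x \<in> B)"
  by (auto simp: symd_def)

lemma symd_cancel: "symd A (symd A B) = B"
  by (auto simp: symd_def)

lemma odd_card_symd:
  assumes "finite P" "finite Q"
  shows "odd (card (symd P Q)) \<longleftrightarrow> odd (card P) \<noteq> odd (card Q)"
proof -
  have "symd P Q = (P \<union> Q) - (P \<inter> Q)" by (auto simp: symd_def)
  then have "card (symd P Q) + card (P \<inter> Q) = card (P \<union> Q)"
    using assms by (simp add: card_Diff_subset Int_lower1 le_supI1 card_mono)
  moreover have "card (P \<union> Q) + card (P \<inter> Q) = card P + card Q"
    using card_Un_Int[OF assms] by simp
  ultimately show ?thesis by presburger
qed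

lemma bdry_symd:
  assumes "finite X" "finite Y"
  shows "bdry (symd X Y) = symd (bdry X) (bdry Y)"
proof -
  have "{e \<in> symd X Y. v \<in> e} = symd {e \<in> X. v \<in> e} {e \<in> Y. v \<in> e}" for v
    by (auto simp: symd_def)
  then show ?thesis
    using assms by (auto simp: bdry_def mem_symd odd_card_symd)
qed

lemma bdry_symd_eq_iff:
  assumes "finite X" "finite Y" "bdry X = A"
  shows "bdry (symd X Y) = symd A B \<longleftrightarrow> bdry Y = B"
  using assms bdry_symd[OF assms(1,2)] symd_cancel by metis

lemma ex_bdry_symd:
  assumes "finite X" "\<exists>F\<subseteq>X. bdry F = A" "\<exists>F\<subseteq>X. bdry F = B"
  shows "\<exists>F\<subseteq>X. bdry F = symd A B"
proof -
  obtain F1 F2 where F: "F1 \<subseteq> X" "bdry F1 = A" "F2 \<subseteq> X" "bdry F2 = B"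
    using assms(2,3) by blast
  then have "bdry (symd F1 F2) = symd A B"
    using assms(1) by (simp add: bdry_symd finite_subset)
  moreover have "symd F1 F2 \<subseteq> X"
    using F by (auto simp: symd_def)
  ultimately show ?thesis by blast
qed

lemma sum_Pow_reindex_symd:
  assumes "\<eta> \<subseteq> E"
  shows "(\<Sum>\<alpha>\<in>Pow E. h (symd \<eta> \<alpha>)) = (\<Sum>\<delta>\<in>Pow E. h \<delta>)"
  by (rule sum.reindex_bij_witness[where i="symd \<eta>" and j="symd \<eta>"])
     (use assms in \<open>auto simp: symd_cancel symd_def\<close>)

section \<open>The loop O(1) model and percolation\<close>

definition loop_Z :: "'v set set \<Rightarrow> ('v set \<Rightarrow> real) \<Rightarrow> 'v set \<Rightarrow> real" where
  "loop_Z E x C = (\<Sum>\<omega>\<in>Pow E. if bdry \<omega> = C then \<Prod>e\<in>\<omega>. x e else 0)"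

lemma loopO1_eq:
  "loopO1 E x C \<omega> = (if \<omega> \<subseteq> E \<and> bdry \<omega> = C then \<Prod>e\<in>\<omega>. x e else 0) / loop_Z E x C"
  by (simp add: loopO1_def loop_Z_def)

lemma loop_Z_eq_sum_SigmaA:
  assumes "finite E"
  shows "loop_Z E x A = (\<Sum>\<eta>\<in>SigmaA E A. \<Prod>e\<in>\<eta>. x e)"
proof -
  have Sigma: "SigmaA E A = {\<eta> \<in> Pow E. bdry \<eta> = A}" by (auto simp: SigmaA_def)
  show ?thesis
    unfolding loop_Z_def Sigma by (rule sum.inter_filter[symmetric]) (simp add: assms)
qed

lemma loop_Z_pos:
  assumes "finite E" "\<forall>e\<in>E. 0 < x e" "\<exists>F\<subseteq>E. bdry F = C"
  shows "0 < loop_Z E x C"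
proof -
  obtain F where F: "F \<subseteq> E" "bdry F = C" using assms(3) by blast
  have "0 < (\<Prod>e\<in>F. x e)" using assms(2) F by (intro prod_pos) auto
  moreover have "0 \<le> (if bdry \<omega> = C then \<Prod>e\<in>\<omega>. x e else 0)" if "\<omega> \<in> Pow E" for \<omega>
  proof -
    have "\<forall>e\<in>\<omega>. 0 \<le> x e" using that assms(2) by (auto intro: less_imp_le)
    then show ?thesis by (simp add: prod_nonneg)
  qed
  ultimately show ?thesis
    unfolding loop_Z_def using assms(1) F by (intro sum_pos2[where i=F]) auto
qed

lemma sum_loopO1:
  assumes "finite E" "loop_Z E x C \<noteq> 0"
  shows "(\<Sum>\<omega>\<in>Pow E. loopO1 E x C \<omega>) = 1"
  using assms by (simp add: loopO1_eq sum_divide_distrib[symmetric] loop_Z_def cong: if_cong)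

lemma perc_eq_prod:
  assumes "finite E" "\<beta> \<subseteq> E"
  shows "perc E p \<beta> = (\<Prod>e\<in>E. if e \<in> \<beta> then p e else 1 - p e)"
  using assms by (simp add: perc_def prod.If_cases Int_absorb1 Diff_eq)

lemma sum_perc:
  assumes "finite E"
  shows "(\<Sum>\<beta>\<in>Pow E. perc E p \<beta>) = 1"
proof -
  have "(\<Sum>\<beta>\<in>Pow E. perc E p \<beta>) = (\<Sum>\<beta>\<in>Pow E. \<Prod>e\<in>E. if e \<in> \<beta> then p e else 1 - p e)"
    using assms by (intro sum.cong) (auto simp: perc_eq_prod)
  also have "\<dots> = 1"
    using assms by (simp add: sum_Pow_prod_if)
  finally show ?thesis .
qed

lemma sum_munion:
  assumes "finite E"
  shows "(\<Sum>\<omega>\<in>Pow E. munion E \<pi> \<nu> \<omega>) = (\<Sum>\<alpha>\<in>Pow E. \<pi> \<alpha>) * (\<Sum>\<beta>\<in>Pow E. \<nu> \<beta>)"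
proof -
  have "(\<Sum>\<omega>\<in>Pow E. munion E \<pi> \<nu> \<omega>)
      = (\<Sum>\<alpha>\<in>Pow E. \<Sum>\<beta>\<in>Pow E. \<Sum>\<omega>\<in>Pow E. if \<alpha> \<union> \<beta> = \<omega> then \<pi> \<alpha> * \<nu> \<beta> else 0)"
    unfolding munion_def by (subst sum.swap) (rule sum.cong[OF refl], rule sum.swap)
  also have "\<dots> = (\<Sum>\<alpha>\<in>Pow E. \<Sum>\<beta>\<in>Pow E. \<pi> \<alpha> * \<nu> \<beta>)"
    using assms by (intro sum.cong) auto
  finally show ?thesis by (simp add: sum_product)
qed

lemma sum_perc_union:
  assumes "finite E" "\<alpha> \<subseteq> \<omega>" "\<omega> \<subseteq> E"
  shows "(\<Sum>\<beta>\<in>Pow E. if \<alpha> \<union> \<beta> = \<omega> then perc E p \<beta> else 0)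
       = (\<Prod>e\<in>E. if e \<in> \<alpha> then 1 else if e \<in> \<omega> then p e else 1 - p e)"
proof -
  have interval: "{\<beta> \<in> Pow E. \<alpha> \<union> \<beta> = \<omega>} = {\<beta>. \<omega> - \<alpha> \<subseteq> \<beta> \<and> \<beta> \<subseteq> \<omega>}"
    using assms by auto
  have "(\<Sum>\<beta>\<in>Pow E. if \<alpha> \<union> \<beta> = \<omega> then perc E p \<beta> else 0)
      = (\<Sum>\<beta> | \<omega> - \<alpha> \<subseteq> \<beta> \<and> \<beta> \<subseteq> \<omega>. perc E p \<beta>)"
    unfolding interval[symmetric] by (rule sum.inter_filter[symmetric]) (simp add: assms)
  also have "\<dots> = (\<Sum>\<beta> | \<omega> - \<alpha> \<subseteq> \<beta> \<and> \<beta> \<subseteq> \<omega>. \<Prod>e\<in>E. if e \<in> \<beta> then p e else 1 - p e)"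
    by (intro sum.cong refl perc_eq_prod) (use assms in auto)
  also have "\<dots> = (\<Prod>e\<in>E. if e \<in> \<omega> - \<alpha> then p e else if e \<in> \<omega> then p e + (1 - p e) else 1 - p e)"
    using assms by (intro sum_interval_prod_if) auto
  also have "\<dots> = (\<Prod>e\<in>E. if e \<in> \<alpha> then 1 else if e \<in> \<omega> then p e else 1 - p e)"
    using assms by (intro prod.cong) auto
  finally show ?thesis .
qed

lemma munion_dirac:
  assumes "finite E" "\<eta> \<subseteq> E" "\<omega> \<subseteq> E"
  shows "munion E \<pi> (dirac \<eta>) \<omega> = (if \<eta> \<subseteq> \<omega> then \<Sum>\<gamma> | \<omega> - \<eta> \<subseteq> \<gamma> \<and> \<gamma> \<subseteq> \<omega>. \<pi> \<gamma> else 0)"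
proof -
  have "(\<Sum>\<beta>\<in>Pow E. if \<gamma> \<union> \<beta> = \<omega> then \<pi> \<gamma> * dirac \<eta> \<beta> else 0)
      = (\<Sum>\<beta>\<in>Pow E. if \<beta> = \<eta> then (if \<gamma> \<union> \<eta> = \<omega> then \<pi> \<gamma> else 0) else 0)" for \<gamma>
    by (intro sum.cong) (auto simp: dirac_def)
  then have "munion E \<pi> (dirac \<eta>) \<omega> = (\<Sum>\<gamma>\<in>Pow E. if \<gamma> \<union> \<eta> = \<omega> then \<pi> \<gamma> else 0)"
    using assms by (simp add: munion_def)
  also have "\<dots> = (\<Sum>\<gamma> \<in> {\<gamma> \<in> Pow E. \<gamma> \<union> \<eta> = \<omega>}. \<pi> \<gamma>)"
    using assms by (subst sum.inter_filter) auto
  also have "{\<gamma> \<in> Pow E. \<gamma> \<union> \<eta> = \<omega>} = (if \<eta> \<subseteq> \<omega> then {\<gamma>. \<omega> - \<eta> \<subseteq> \<gamma> \<and> \<gamma> \<subseteq> \<omega>} else {})"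
    using assms by auto
  finally show ?thesis by simp
qed

(* Z_C times the probability that l^C_t samples \<delta> and its union with P_{t^2} is \<omega>. *)

definition loop_perc_weight :: "'v set set \<Rightarrow> ('v set \<Rightarrow> real) \<Rightarrow> 'v set set \<Rightarrow> 'v set set \<Rightarrow> real" where
  "loop_perc_weight E t \<omega> \<delta> = (\<Prod>e\<in>E. if e \<in> \<delta> then t e else if e \<in> \<omega> then (t e)\<^sup>2 else 1 - (t e)\<^sup>2)"

definition loop_perc_sum :: "'v set set \<Rightarrow> ('v set \<Rightarrow> real) \<Rightarrow> 'v set \<Rightarrow> 'v set set \<Rightarrow> real" where
  "loop_perc_sum E t C \<omega> = (\<Sum>\<delta>\<in>Pow E. if \<delta> \<subseteq> \<omega> \<and> bdry \<delta> = C then loop_perc_weight E t \<omega> \<delta> else 0)"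

lemma munion_loopO1_perc:
  assumes "finite E" "\<omega> \<subseteq> E"
  shows "munion E (loopO1 E t C) (perc E (\<lambda>e. (t e)\<^sup>2)) \<omega> = loop_perc_sum E t C \<omega> / loop_Z E t C"
proof -
  let ?p = "\<lambda>e. (t e)\<^sup>2"
  have "(\<Sum>\<beta>\<in>Pow E. if \<alpha> \<union> \<beta> = \<omega> then loopO1 E t C \<alpha> * perc E ?p \<beta> else 0)
      = (if \<alpha> \<subseteq> \<omega> \<and> bdry \<alpha> = C then loop_perc_weight E t \<omega> \<alpha> / loop_Z E t C else 0)"
    if "\<alpha> \<subseteq> E" for \<alpha>
  proof (cases "\<alpha> \<subseteq> \<omega>")
    case True
    have restrict: "(\<Prod>e\<in>\<alpha>. t e) = (\<Prod>e\<in>E. if e \<in> \<alpha> then t e else 1)"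
      using prod.inter_restrict[OF assms(1), of t \<alpha>] that by (simp add: Int_absorb1)
    have weight: "(\<Prod>e\<in>\<alpha>. t e) * (\<Prod>e\<in>E. if e \<in> \<alpha> then 1 else if e \<in> \<omega> then ?p e else 1 - ?p e)
        = loop_perc_weight E t \<omega> \<alpha>"
      unfolding loop_perc_weight_def restrict prod.distrib[symmetric] by (intro prod.cong) auto
    have "(\<Sum>\<beta>\<in>Pow E. if \<alpha> \<union> \<beta> = \<omega> then loopO1 E t C \<alpha> * perc E ?p \<beta> else 0)
        = loopO1 E t C \<alpha> * (\<Sum>\<beta>\<in>Pow E. if \<alpha> \<union> \<beta> = \<omega> then perc E ?p \<beta> else 0)"
      unfolding sum_distrib_left by (intro sum.cong) auto
    also have "\<dots> = loopO1 E t C \<alpha> * (\<Prod>e\<in>E. if e \<in> \<alpha> then 1 else if e \<in> \<omega> then ?p e else 1 - ?p e)"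
      using True assms by (simp add: sum_perc_union)
    finally show ?thesis
      using that True weight by (simp add: loopO1_eq)
  next
    case False
    then have "\<alpha> \<union> \<beta> \<noteq> \<omega>" for \<beta> by auto
    with False show ?thesis by simp
  qed
  then have "munion E (loopO1 E t C) (perc E ?p) \<omega>
      = (\<Sum>\<alpha>\<in>Pow E. if \<alpha> \<subseteq> \<omega> \<and> bdry \<alpha> = C then loop_perc_weight E t \<omega> \<alpha> / loop_Z E t C else 0)"
    unfolding munion_def by (intro sum.cong) auto
  also have "\<dots> = loop_perc_sum E t C \<omega> / loop_Z E t C"
    unfolding loop_perc_sum_def sum_divide_distrib by (intro sum.cong) auto
  finally show ?thesis .
qed

lemma loop_perc_weight_pos:
  assumes "\<forall>e\<in>E. 0 < t e \<and> t e < 1"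
  shows "0 < loop_perc_weight E t \<omega> \<delta>"
  unfolding loop_perc_weight_def by (intro prod_pos) (use assms in \<open>fastforce simp: abs_square_less_1\<close>)

lemma loop_perc_sum_nonneg:
  assumes "\<forall>e\<in>E. 0 < t e \<and> t e < 1"
  shows "0 \<le> loop_perc_sum E t C \<omega>"
  unfolding loop_perc_sum_def
  using loop_perc_weight_pos[OF assms] by (intro sum_nonneg) (simp add: less_imp_le)

lemma loop_perc_sum_pos:
  assumes "finite E" "\<forall>e\<in>E. 0 < t e \<and> t e < 1" "\<delta> \<subseteq> \<omega>" "\<omega> \<subseteq> E" "bdry \<delta> = C"
  shows "0 < loop_perc_sum E t C \<omega>"
  unfolding loop_perc_sum_def
  using assms loop_perc_weight_pos[OF assms(2)]
  by (intro sum_pos2[where i=\<delta>]) (auto simp: less_imp_le)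

section \<open>Switching\<close>

lemma loop_perc_weight_symd:
  assumes "finite E" "\<alpha> \<subseteq> \<omega>" "\<eta> \<subseteq> \<omega>" "\<omega> \<subseteq> E"
  shows "loop_perc_weight E t \<omega> (symd \<eta> \<alpha>)
       = (\<Prod>e\<in>\<eta>. t e) * (\<Sum>\<gamma> | (\<omega> - \<eta>) \<union> \<alpha> \<subseteq> \<gamma> \<and> \<gamma> \<subseteq> \<omega>. loop_perc_weight E t \<gamma> \<alpha>)"
proof -
  let ?f = "\<lambda>e. if e \<in> \<alpha> then t e else (t e)\<^sup>2"
  let ?g = "\<lambda>e. if e \<in> \<alpha> then t e else 1 - (t e)\<^sup>2"
  have "(\<Sum>\<gamma> | (\<omega> - \<eta>) \<union> \<alpha> \<subseteq> \<gamma> \<and> \<gamma> \<subseteq> \<omega>. loop_perc_weight E t \<gamma> \<alpha>)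
      = (\<Sum>\<gamma> | (\<omega> - \<eta>) \<union> \<alpha> \<subseteq> \<gamma> \<and> \<gamma> \<subseteq> \<omega>. \<Prod>e\<in>E. if e \<in> \<gamma> then ?f e else ?g e)"
    unfolding loop_perc_weight_def by (intro sum.cong refl prod.cong) auto
  also have "\<dots> = (\<Prod>e\<in>E. if e \<in> (\<omega> - \<eta>) \<union> \<alpha> then ?f e else if e \<in> \<omega> then ?f e + ?g e else ?g e)"
    using assms by (intro sum_interval_prod_if) auto
  finally have interval: "(\<Sum>\<gamma> | (\<omega> - \<eta>) \<union> \<alpha> \<subseteq> \<gamma> \<and> \<gamma> \<subseteq> \<omega>. loop_perc_weight E t \<gamma> \<alpha>)
      = (\<Prod>e\<in>E. if e \<in> (\<omega> - \<eta>) \<union> \<alpha> then ?f e else if e \<in> \<omega> then ?f e + ?g e else ?g e)" .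
  have restrict: "(\<Prod>e\<in>\<eta>. t e) = (\<Prod>e\<in>E. if e \<in> \<eta> then t e else 1)"
    using prod.inter_restrict[OF assms(1), of t \<eta>] assms by (simp add: Int_absorb1)
  show ?thesis
    unfolding interval restrict unfolding loop_perc_weight_def prod.distrib[symmetric]
    using assms by (intro prod.cong) (auto simp: mem_symd power2_eq_square)
qed

lemma loop_perc_sum_symd_reindex:
  assumes "finite E" "\<eta> \<subseteq> \<omega>" "\<omega> \<subseteq> E" "bdry \<eta> = A"
  shows "loop_perc_sum E t (symd A B) \<omega>
       = (\<Sum>\<alpha>\<in>Pow E. if \<alpha> \<subseteq> \<omega> \<and> bdry \<alpha> = B then loop_perc_weight E t \<omega> (symd \<eta> \<alpha>) else 0)"
proof -
  let ?w = "loop_perc_weight E t \<omega>"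
  have "loop_perc_sum E t (symd A B) \<omega>
      = (\<Sum>\<alpha>\<in>Pow E. if symd \<eta> \<alpha> \<subseteq> \<omega> \<and> bdry (symd \<eta> \<alpha>) = symd A B then ?w (symd \<eta> \<alpha>) else 0)"
    unfolding loop_perc_sum_def using assms
    by (intro sum_Pow_reindex_symd[symmetric, where h="\<lambda>\<delta>. if \<delta> \<subseteq> \<omega> \<and> bdry \<delta> = symd A B then ?w \<delta> else 0"])
       auto
  also have "\<dots> = (\<Sum>\<alpha>\<in>Pow E. if \<alpha> \<subseteq> \<omega> \<and> bdry \<alpha> = B then ?w (symd \<eta> \<alpha>) else 0)"
  proof (intro sum.cong refl)
    fix \<alpha> assume "\<alpha> \<in> Pow E"
    then have "bdry (symd \<eta> \<alpha>) = symd A B \<longleftrightarrow> bdry \<alpha> = B"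
      using assms by (intro bdry_symd_eq_iff) (auto intro: finite_subset)
    moreover have "symd \<eta> \<alpha> \<subseteq> \<omega> \<longleftrightarrow> \<alpha> \<subseteq> \<omega>"
      using assms by (auto simp: symd_def)
    ultimately show "(if symd \<eta> \<alpha> \<subseteq> \<omega> \<and> bdry (symd \<eta> \<alpha>) = symd A B then ?w (symd \<eta> \<alpha>) else 0)
        = (if \<alpha> \<subseteq> \<omega> \<and> bdry \<alpha> = B then ?w (symd \<eta> \<alpha>) else 0)"
      by simp
  qed
  finally show ?thesis .
qed

lemma sum_loop_perc_weight_symd:
  assumes "finite E" "\<omega> \<subseteq> E"
  shows "(\<Sum>\<alpha>2\<in>Pow E. if \<alpha>1 \<subseteq> \<omega> \<and> bdry \<alpha>1 = A \<and> \<alpha>2 \<subseteq> \<omega> \<and> bdry \<alpha>2 = B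
            then c * loop_perc_weight E t \<omega> (symd \<alpha>1 \<alpha>2) else 0)
       = (if \<alpha>1 \<subseteq> \<omega> \<and> bdry \<alpha>1 = A then c * loop_perc_sum E t (symd A B) \<omega> else 0)"
proof (cases "\<alpha>1 \<subseteq> \<omega> \<and> bdry \<alpha>1 = A")
  case True
  then have "(\<Sum>\<alpha>2\<in>Pow E. if \<alpha>1 \<subseteq> \<omega> \<and> bdry \<alpha>1 = A \<and> \<alpha>2 \<subseteq> \<omega> \<and> bdry \<alpha>2 = B
        then c * loop_perc_weight E t \<omega> (symd \<alpha>1 \<alpha>2) else 0)
      = c * (\<Sum>\<alpha>2\<in>Pow E. if \<alpha>2 \<subseteq> \<omega> \<and> bdry \<alpha>2 = B then loop_perc_weight E t \<omega> (symd \<alpha>1 \<alpha>2) else 0)"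
    unfolding sum_distrib_left by (intro sum.cong refl) auto
  with True show ?thesis
    using loop_perc_sum_symd_reindex[OF assms(1) _ assms(2), of \<alpha>1 A t B] by simp
next
  case False
  then have "(\<Sum>\<alpha>2\<in>Pow E. if \<alpha>1 \<subseteq> \<omega> \<and> bdry \<alpha>1 = A \<and> \<alpha>2 \<subseteq> \<omega> \<and> bdry \<alpha>2 = B
        then c * loop_perc_weight E t \<omega> (symd \<alpha>1 \<alpha>2) else 0) = 0"
    by (intro sum.neutral ballI) auto
  with False show ?thesis by auto
qed

lemma loop_perc_sum_symd:
  assumes "finite E" "\<eta> \<subseteq> \<omega>" "\<omega> \<subseteq> E" "bdry \<eta> = A"
  shows "loop_perc_sum E t (symd A B) \<omega>
       = (\<Prod>e\<in>\<eta>. t e) * (\<Sum>\<gamma> | \<omega> - \<eta> \<subseteq> \<gamma> \<and> \<gamma> \<subseteq> \<omega>. loop_perc_sum E t B \<gamma>)"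
proof -
  let ?I = "{\<gamma>. \<omega> - \<eta> \<subseteq> \<gamma> \<and> \<gamma> \<subseteq> \<omega>}"
  let ?w = "loop_perc_weight E t"
  have finite_I: "finite ?I"
    using assms by (rule_tac finite_subset[of _ "Pow E"]) auto
  have "loop_perc_sum E t (symd A B) \<omega>
      = (\<Sum>\<alpha>\<in>Pow E. if \<alpha> \<subseteq> \<omega> \<and> bdry \<alpha> = B
                   then (\<Prod>e\<in>\<eta>. t e) * (\<Sum>\<gamma> | (\<omega> - \<eta>) \<union> \<alpha> \<subseteq> \<gamma> \<and> \<gamma> \<subseteq> \<omega>. ?w \<gamma> \<alpha>) else 0)"
    unfolding loop_perc_sum_symd_reindex[OF assms]
    using assms by (intro sum.cong refl) (simp add: loop_perc_weight_symd)
  also have "\<dots> = (\<Prod>e\<in>\<eta>. t e) * (\<Sum>\<alpha>\<in>Pow E. \<Sum>\<gamma>\<in>?I. if \<alpha> \<subseteq> \<gamma> \<and> bdry \<alpha> = B then ?w \<gamma> \<alpha> else 0)"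
  proof -
    have "(\<Sum>\<gamma>\<in>?I. if \<alpha> \<subseteq> \<gamma> \<and> bdry \<alpha> = B then ?w \<gamma> \<alpha> else 0)
        = (if \<alpha> \<subseteq> \<omega> \<and> bdry \<alpha> = B then \<Sum>\<gamma> | (\<omega> - \<eta>) \<union> \<alpha> \<subseteq> \<gamma> \<and> \<gamma> \<subseteq> \<omega>. ?w \<gamma> \<alpha> else 0)" for \<alpha>
    proof (cases "\<alpha> \<subseteq> \<omega> \<and> bdry \<alpha> = B")
      case True
      then have "{\<gamma> \<in> ?I. \<alpha> \<subseteq> \<gamma>} = {\<gamma>. (\<omega> - \<eta>) \<union> \<alpha> \<subseteq> \<gamma> \<and> \<gamma> \<subseteq> \<omega>}" by auto
      with True finite_I show ?thesis by (simp add: sum.inter_filter[symmetric])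
    next
      case False
      have "(\<Sum>\<gamma>\<in>?I. if \<alpha> \<subseteq> \<gamma> \<and> bdry \<alpha> = B then ?w \<gamma> \<alpha> else 0) = 0"
        by (rule sum.neutral) (use False in auto)
      with False show ?thesis by auto
    qed
    then show ?thesis
      by (simp add: sum_distrib_left if_distrib[of "\<lambda>x. _ * x"] cong: if_cong)
  qed
  also have "\<dots> = (\<Prod>e\<in>\<eta>. t e) * (\<Sum>\<gamma>\<in>?I. loop_perc_sum E t B \<gamma>)"
    unfolding loop_perc_sum_def by (subst sum.swap) simp
  finally show ?thesis .
qed

lemma loop_perc_sum_symd_eq_munion:
  assumes "finite E" "\<eta> \<subseteq> \<omega>" "\<omega> \<subseteq> E" "bdry \<eta> = A" "loop_Z E t B \<noteq> 0"
  shows "loop_perc_sum E t (symd A B) \<omega> = (\<Prod>e\<in>\<eta>. t e) * loop_Z E t B *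
           munion E (munion E (loopO1 E t B) (perc E (\<lambda>e. (t e)\<^sup>2))) (dirac \<eta>) \<omega>"
proof -
  let ?I = "{\<gamma>. \<omega> - \<eta> \<subseteq> \<gamma> \<and> \<gamma> \<subseteq> \<omega>}"
  have "munion E (munion E (loopO1 E t B) (perc E (\<lambda>e. (t e)\<^sup>2))) (dirac \<eta>) \<omega>
      = (\<Sum>\<gamma>\<in>?I. munion E (loopO1 E t B) (perc E (\<lambda>e. (t e)\<^sup>2)) \<gamma>)"
    using assms by (simp add: munion_dirac)
  also have "\<dots> = (\<Sum>\<gamma>\<in>?I. loop_perc_sum E t B \<gamma> / loop_Z E t B)"
    using assms by (intro sum.cong refl munion_loopO1_perc) auto
  also have "\<dots> = (\<Sum>\<gamma>\<in>?I. loop_perc_sum E t B \<gamma>) / loop_Z E t B"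
    by (rule sum_divide_distrib[symmetric])
  finally show ?thesis
    using assms(5) by (simp add: loop_perc_sum_symd[OF assms(1-4)])
qed

lemma sum_supsets_loop_perc_sum:
  assumes "finite E" "\<forall>e\<in>E. 0 < t e" "\<eta> \<subseteq> E" "bdry \<eta> = A" "\<exists>F\<subseteq>E. bdry F = B"
  shows "(\<Sum>\<omega>\<in>Pow E. if \<eta> \<subseteq> \<omega> then loop_perc_sum E t (symd A B) \<omega> else 0)
       = (\<Prod>e\<in>\<eta>. t e) * loop_Z E t B"
proof -
  let ?M = "munion E (munion E (loopO1 E t B) (perc E (\<lambda>e. (t e)\<^sup>2))) (dirac \<eta>)"
  have Z: "loop_Z E t B \<noteq> 0"
    using loop_Z_pos[OF assms(1,2,5)] by simp
  have "(if \<eta> \<subseteq> \<omega> then loop_perc_sum E t (symd A B) \<omega> else 0) = (\<Prod>e\<in>\<eta>. t e) * loop_Z E t B * ?M \<omega>"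
    if "\<omega> \<in> Pow E" for \<omega>
  proof (cases "\<eta> \<subseteq> \<omega>")
    case True
    with that show ?thesis
      using loop_perc_sum_symd_eq_munion[OF assms(1) True _ assms(4) Z] by simp
  next
    case False
    with that have "?M \<omega> = 0"
      using munion_dirac[OF assms(1,3), of \<omega>] by simp
    with False show ?thesis by simp
  qed
  then have "(\<Sum>\<omega>\<in>Pow E. if \<eta> \<subseteq> \<omega> then loop_perc_sum E t (symd A B) \<omega> else 0)
      = (\<Prod>e\<in>\<eta>. t e) * loop_Z E t B * (\<Sum>\<omega>\<in>Pow E. ?M \<omega>)"
    by (simp add: sum_distrib_left)
  moreover have "(\<Sum>\<omega>\<in>Pow E. dirac \<eta> \<omega>) = 1"
    using assms by (simp add: dirac_def)
  ultimately show ?thesis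
    using assms Z by (simp add: sum_munion sum_loopO1 sum_perc)
qed

section \<open>Random currents and their traces\<close>

lemma has_sum_product_nonneg:
  fixes f :: "'a \<Rightarrow> real" and g :: "'b \<Rightarrow> real"
  assumes f: "(f has_sum a) A" and g: "(g has_sum b) B"
    and "\<And>x. x \<in> A \<Longrightarrow> 0 \<le> f x" "\<And>y. y \<in> B \<Longrightarrow> 0 \<le> g y"
  shows "((\<lambda>(x, y). f x * g y) has_sum a * b) (A \<times> B)"
proof (rule has_sum_SigmaI)
  show fiber: "((\<lambda>y. (\<lambda>(x, y). f x * g y) (x, y)) has_sum f x * b) B" if "x \<in> A" for x
    using has_sum_cmult_right[OF g, of "f x"] by simp
  show "((\<lambda>x. f x * b) has_sum a * b) A"
    using f by (rule has_sum_cmult_left)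
  then show "(\<lambda>(x, y). f x * g y) summable_on A \<times> B"
    using assms fiber by (intro summable_on_SigmaI[where g="\<lambda>x. f x * b"]) (auto intro: has_sum_imp_summable)
qed

lemma bij_betw_fun_upd_functions:
  assumes "x \<notin> F"
  shows "bij_betw (\<lambda>(n, k). n(x := k))
           ({n. (\<forall>a\<in>F. n a \<in> S a) \<and> (\<forall>a. a \<notin> F \<longrightarrow> n a = 0)} \<times> S x)
           {n. (\<forall>a\<in>insert x F. n a \<in> S a) \<and> (\<forall>a. a \<notin> insert x F \<longrightarrow> n a = 0)}"
proof -
  let ?S = "\<lambda>A. {n. (\<forall>a\<in>A. n a \<in> S a) \<and> (\<forall>a. a \<notin> A \<longrightarrow> n a = 0)}"
  have "inj_on (\<lambda>(n, k). n(x := k)) (?S F \<times> S x)"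
  proof (rule inj_onI)
    fix p q assume "p \<in> ?S F \<times> S x" "q \<in> ?S F \<times> S x"
      and eq: "(\<lambda>(n, k). n(x := k)) p = (\<lambda>(n, k). n(x := k)) q"
    moreover obtain n k n' k' where pq: "p = (n, k)" "q = (n', k')" by fastforce
    ultimately have "n x = 0" "n' x = 0" "n(x := k) = n'(x := k')"
      using assms by auto
    then show "p = q"
      unfolding pq by (metis fun_upd_idem_iff fun_upd_upd fun_upd_same)
  qed
  moreover have "(\<lambda>(n, k). n(x := k)) ` (?S F \<times> S x) = ?S (insert x F)"
  proof (intro equalityI subsetI)
    fix n assume "n \<in> ?S (insert x F)"
    then have "(n(x := 0), n x) \<in> ?S F \<times> S x" using assms by auto
    then show "n \<in> (\<lambda>(n, k). n(x := k)) ` (?S F \<times> S x)"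
      by (auto intro!: image_eqI[where x="(n(x := 0), n x)"])
  qed (use assms in auto)
  ultimately show ?thesis
    by (simp add: bij_betw_def)
qed

lemma has_sum_prod_functions:
  fixes f :: "'a \<Rightarrow> nat \<Rightarrow> real"
  assumes "finite A" "\<And>a k. a \<in> A \<Longrightarrow> 0 \<le> f a k" "\<And>a. a \<in> A \<Longrightarrow> (f a has_sum s a) (S a)"
  shows "((\<lambda>n. \<Prod>a\<in>A. f a (n a)) has_sum (\<Prod>a\<in>A. s a))
           {n. (\<forall>a\<in>A. n a \<in> S a) \<and> (\<forall>a. a \<notin> A \<longrightarrow> n a = 0)}"
  using assms
proof (induction A rule: finite_induct)
  case empty
  have "{n :: 'a \<Rightarrow> nat. \<forall>a. n a = 0} = {\<lambda>_. 0}"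
    by (auto simp: fun_eq_iff)
  then show ?case by (simp add: has_sum_finiteI)
next
  case (insert x F)
  let ?S = "\<lambda>A. {n. (\<forall>a\<in>A. n a \<in> S a) \<and> (\<forall>a. a \<notin> A \<longrightarrow> n a = 0)}"
  have "((\<lambda>(n, k). (\<Prod>a\<in>F. f a (n a)) * f x k) has_sum (\<Prod>a\<in>F. s a) * s x) (?S F \<times> S x)"
    using insert by (intro has_sum_product_nonneg) (auto intro!: prod_nonneg)
  moreover have "(\<lambda>p. \<Prod>a\<in>insert x F. f a (((\<lambda>(n, k). n(x := k)) p) a))
      = (\<lambda>(n, k). (\<Prod>a\<in>F. f a (n a)) * f x k)"
  proof (intro ext, clarify)
    fix n k
    have "(\<Prod>a\<in>F. f a ((n(x := k)) a)) = (\<Prod>a\<in>F. f a (n a))"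
      using insert.hyps by (intro prod.cong) auto
    with insert.hyps show "(\<Prod>a\<in>insert x F. f a ((n(x := k)) a)) = (\<Prod>a\<in>F. f a (n a)) * f x k"
      by (simp add: mult.commute)
  qed
  ultimately have "((\<lambda>n. \<Prod>a\<in>insert x F. f a (n a)) has_sum (\<Prod>a\<in>F. s a) * s x) (?S (insert x F))"
    using has_sum_reindex_bij_betw[OF bij_betw_fun_upd_functions[OF insert.hyps(2)],
        of "\<lambda>n. \<Prod>a\<in>insert x F. f a (n a)"]
    by simp
  with insert.hyps show ?case by (simp add: mult.commute)
qed

lemma has_sum_poisson_odd:
  fixes J :: real
  assumes "0 \<le> J"
  shows "((\<lambda>k. exp (- J) * J ^ k / fact k) has_sum exp (- J) * sinh J) {k. odd k}"
proof -
  have "((\<lambda>n. if even n then 0 else J ^ n /\<^sub>R fact n) has_sum sinh J) UNIV"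
    by (rule sums_nonneg_imp_has_sum[OF sinh_converges]) (use assms in auto)
  then have "((\<lambda>n. J ^ n / fact n) has_sum sinh J) {k. odd k}"
    by (subst (asm) has_sum_cong_neutral[where T="{k. odd k}" and g="\<lambda>n. J ^ n / fact n"])
       (auto simp: field_simps)
  from has_sum_cmult_right[OF this, of "exp (- J)"] show ?thesis by simp
qed

lemma has_sum_poisson_even_pos:
  fixes J :: real
  assumes "0 \<le> J"
  shows "((\<lambda>k. exp (- J) * J ^ k / fact k) has_sum exp (- J) * (cosh J - 1)) {k. even k \<and> k \<noteq> 0}"
proof -
  have "(\<lambda>n. (if even n then J ^ n /\<^sub>R fact n else 0) - (if n = 0 then 1 else 0)) sums (cosh J - 1)"
    by (rule sums_diff[OF cosh_converges]) (use sums_single[of 0 "\<lambda>_. 1::real"] in simp)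
  then have "((\<lambda>n. (if even n then J ^ n /\<^sub>R fact n else 0) - (if n = 0 then 1 else 0))
               has_sum (cosh J - 1)) UNIV"
    by (rule sums_nonneg_imp_has_sum) (use assms in auto)
  then have "((\<lambda>n. J ^ n / fact n) has_sum (cosh J - 1)) {k. even k \<and> k \<noteq> 0}"
    by (subst (asm) has_sum_cong_neutral[where T="{k. even k \<and> k \<noteq> 0}" and g="\<lambda>n. J ^ n / fact n"])
       (auto simp: field_simps)
  from has_sum_cmult_right[OF this, of "exp (- J)"] show ?thesis by simp
qed

definition odd_trace_values :: "'v set set \<Rightarrow> 'v set set \<Rightarrow> 'v set \<Rightarrow> nat set" where
  "odd_trace_values \<alpha> \<omega> e =
     (if e \<in> \<alpha> then {k. odd k} else if e \<in> \<omega> then {k. even k \<and> k \<noteq> 0} else {0})"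

definition currents_odd_trace :: "'v set set \<Rightarrow> 'v set set \<Rightarrow> 'v set set \<Rightarrow> ('v set \<Rightarrow> nat) set" where
  "currents_odd_trace E \<alpha> \<omega> = {n. (\<forall>e\<in>E. n e \<in> odd_trace_values \<alpha> \<omega> e) \<and> (\<forall>e. e \<notin> E \<longrightarrow> n e = 0)}"

lemma currents_odd_trace_iff:
  assumes "\<alpha> \<subseteq> \<omega>" "\<omega> \<subseteq> E"
  shows "n \<in> currents_odd_trace E \<alpha> \<omega> \<longleftrightarrow>
           n \<in> currents E \<and> {e \<in> E. odd (n e)} = \<alpha> \<and> {e \<in> E. 0 < n e} = \<omega>"
proof -
  have edge_values: "n e \<in> odd_trace_values \<alpha> \<omega> e \<longleftrightarrow> (odd (n e) \<longleftrightarrow> e \<in> \<alpha>) \<and> (0 < n e \<longleftrightarrow> e \<in> \<omega>)" for e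
    using assms by (auto simp: odd_trace_values_def intro: odd_pos)
  show ?thesis
    unfolding currents_odd_trace_def currents_def mem_Collect_eq edge_values set_eq_iff
    using assms by auto
qed

lemma csrc_eq_bdry_odd:
  assumes "finite E"
  shows "csrc E n = bdry {e \<in> E. odd (n e)}"
proof -
  have "{e \<in> {e \<in> E. v \<in> e}. odd (n e)} = {e \<in> {e \<in> E. odd (n e)}. v \<in> e}" for v
    by auto
  then show ?thesis
    using assms by (simp add: csrc_def bdry_def even_sum_iff)
qed

lemma currents_trace_eq_Union:
  assumes "finite E" "\<omega> \<subseteq> E"
  shows "{n \<in> currents E. csrc E n = C \<and> {e \<in> E. 0 < n e} = \<omega>}
       = (\<Union>\<alpha> \<in> {\<alpha> \<in> Pow E. \<alpha> \<subseteq> \<omega> \<and> bdry \<alpha> = C}. currents_odd_trace E \<alpha> \<omega>)"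
proof (intro equalityI subsetI)
  fix n assume "n \<in> {n \<in> currents E. csrc E n = C \<and> {e \<in> E. 0 < n e} = \<omega>}"
  then have n: "n \<in> currents E" "csrc E n = C" and trace: "{e \<in> E. 0 < n e} = \<omega>" by auto
  let ?\<alpha> = "{e \<in> E. odd (n e)}"
  have "?\<alpha> \<subseteq> \<omega>" unfolding trace[symmetric] by (auto intro: odd_pos)
  moreover have "n \<in> currents_odd_trace E ?\<alpha> \<omega>"
    using currents_odd_trace_iff[OF \<open>?\<alpha> \<subseteq> \<omega>\<close> assms(2)] n trace by simp
  moreover have "bdry ?\<alpha> = C"
    using n csrc_eq_bdry_odd[OF assms(1)] by simp
  ultimately show "n \<in> (\<Union>\<alpha> \<in> {\<alpha> \<in> Pow E. \<alpha> \<subseteq> \<omega> \<and> bdry \<alpha> = C}. currents_odd_trace E \<alpha> \<omega>)"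
    by (intro UN_I[where a="?\<alpha>"]) auto
next
  fix n assume "n \<in> (\<Union>\<alpha> \<in> {\<alpha> \<in> Pow E. \<alpha> \<subseteq> \<omega> \<and> bdry \<alpha> = C}. currents_odd_trace E \<alpha> \<omega>)"
  then obtain \<alpha> where \<alpha>: "\<alpha> \<subseteq> \<omega>" "bdry \<alpha> = C" and n: "n \<in> currents_odd_trace E \<alpha> \<omega>"
    by auto
  have "n \<in> currents E \<and> {e \<in> E. odd (n e)} = \<alpha> \<and> {e \<in> E. 0 < n e} = \<omega>"
    using currents_odd_trace_iff[OF \<alpha>(1) assms(2)] n by (rule iffD1)
  with \<alpha>(2) show "n \<in> {n \<in> currents E. csrc E n = C \<and> {e \<in> E. 0 < n e} = \<omega>}"
    by (simp add: csrc_eq_bdry_odd[OF assms(1)])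
qed

definition odd_trace_weight :: "'v set set \<Rightarrow> ('v set \<Rightarrow> real) \<Rightarrow> 'v set set \<Rightarrow> 'v set set \<Rightarrow> real" where
  "odd_trace_weight E J \<alpha> \<omega> = (\<Prod>e\<in>E. if e \<in> \<alpha> then sinh (J e) else if e \<in> \<omega> then cosh (J e) - 1 else 1)"

definition trace_weight :: "'v set set \<Rightarrow> ('v set \<Rightarrow> real) \<Rightarrow> 'v set \<Rightarrow> 'v set set \<Rightarrow> real" where
  "trace_weight E J C \<omega> = (\<Sum>\<alpha>\<in>Pow E. if \<alpha> \<subseteq> \<omega> \<and> bdry \<alpha> = C then odd_trace_weight E J \<alpha> \<omega> else 0)"

lemma has_sum_poisson_weight_odd_trace:
  assumes "finite E" "\<forall>e\<in>E. 0 \<le> J e"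
  shows "(poisson_weight E J has_sum (\<Prod>e\<in>E. exp (- J e)) * odd_trace_weight E J \<alpha> \<omega>)
         (currents_odd_trace E \<alpha> \<omega>)"
  unfolding poisson_weight_def currents_odd_trace_def odd_trace_weight_def prod.distrib[symmetric]
proof (rule has_sum_prod_functions[OF assms(1), where f="\<lambda>e k. exp (- J e) * J e ^ k / fact k"])
  fix e assume "e \<in> E"
  then have "0 \<le> J e" using assms(2) by blast
  then show "0 \<le> exp (- J e) * J e ^ k / fact k" for k
    by simp
  show "((\<lambda>k. exp (- J e) * J e ^ k / fact k) has_sum
          exp (- J e) * (if e \<in> \<alpha> then sinh (J e) else if e \<in> \<omega> then cosh (J e) - 1 else 1))
        (odd_trace_values \<alpha> \<omega> e)"
    using has_sum_poisson_odd[OF \<open>0 \<le> J e\<close>] has_sum_poisson_even_pos[OF \<open>0 \<le> J e\<close>]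
    by (simp add: odd_trace_values_def has_sum_finiteI)
qed

lemma currents_odd_trace_disjoint:
  assumes "\<alpha> \<subseteq> \<omega>" "\<alpha>' \<subseteq> \<omega>" "\<omega> \<subseteq> E" "\<alpha> \<noteq> \<alpha>'"
  shows "currents_odd_trace E \<alpha> \<omega> \<inter> currents_odd_trace E \<alpha>' \<omega> = {}"
proof (rule equals0I)
  fix n assume "n \<in> currents_odd_trace E \<alpha> \<omega> \<inter> currents_odd_trace E \<alpha>' \<omega>"
  then have "{e \<in> E. odd (n e)} = \<alpha>" "{e \<in> E. odd (n e)} = \<alpha>'"
    using currents_odd_trace_iff[OF assms(1,3)] currents_odd_trace_iff[OF assms(2,3)] by auto
  with assms(4) show False by simp
qed

lemma has_sum_poisson_weight_trace:
  assumes "finite E" "\<forall>e\<in>E. 0 \<le> J e" "\<omega> \<subseteq> E"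
  shows "(poisson_weight E J has_sum (\<Prod>e\<in>E. exp (- J e)) * trace_weight E J C \<omega>)
           {n \<in> currents E. csrc E n = C \<and> {e \<in> E. 0 < n e} = \<omega>}"
proof -
  let ?A = "{\<alpha> \<in> Pow E. \<alpha> \<subseteq> \<omega> \<and> bdry \<alpha> = C}"
  let ?P = "\<lambda>\<alpha>. odd_trace_weight E J \<alpha> \<omega>"
  have "(poisson_weight E J has_sum (\<Sum>\<alpha>\<in>?A. (\<Prod>e\<in>E. exp (- J e)) * ?P \<alpha>))
          (\<Union>\<alpha>\<in>?A. currents_odd_trace E \<alpha> \<omega>)"
  proof (rule sum_has_sum)
    show "(poisson_weight E J has_sum (\<Prod>e\<in>E. exp (- J e)) * ?P \<alpha>) (currents_odd_trace E \<alpha> \<omega>)" for \<alpha>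
      using has_sum_poisson_weight_odd_trace[OF assms(1,2)] .
    show "currents_odd_trace E \<alpha> \<omega> \<inter> currents_odd_trace E \<alpha>' \<omega> = {}"
      if "\<alpha> \<in> ?A" "\<alpha>' \<in> ?A" "\<alpha> \<noteq> \<alpha>'" for \<alpha> \<alpha>'
      using that assms(3) by (intro currents_odd_trace_disjoint) auto
  qed (use assms in simp)
  moreover have "(\<Sum>\<alpha>\<in>?A. (\<Prod>e\<in>E. exp (- J e)) * ?P \<alpha>) = (\<Prod>e\<in>E. exp (- J e)) * trace_weight E J C \<omega>"
    unfolding trace_weight_def sum_distrib_left[symmetric]
    by (subst sum.inter_filter) (simp_all add: assms(1))
  ultimately show ?thesis
    using currents_trace_eq_Union[OF assms(1,3)] by simp
qed

lemma has_sum_poisson_weight_sources: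
  assumes "finite E" "\<forall>e\<in>E. 0 \<le> J e"
  shows "(poisson_weight E J has_sum (\<Prod>e\<in>E. exp (- J e)) * (\<Sum>\<omega>\<in>Pow E. trace_weight E J C \<omega>))
           {n \<in> currents E. csrc E n = C}"
proof -
  let ?T = "\<lambda>\<omega>. {n \<in> currents E. csrc E n = C \<and> {e \<in> E. 0 < n e} = \<omega>}"
  have "(poisson_weight E J has_sum (\<Sum>\<omega>\<in>Pow E. (\<Prod>e\<in>E. exp (- J e)) * trace_weight E J C \<omega>))
          (\<Union>\<omega>\<in>Pow E. ?T \<omega>)"
  proof (rule sum_has_sum)
    show "(poisson_weight E J has_sum (\<Prod>e\<in>E. exp (- J e)) * trace_weight E J C \<omega>) (?T \<omega>)"
      if "\<omega> \<in> Pow E" for \<omega>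
      using that assms by (intro has_sum_poisson_weight_trace) auto
    show "?T \<omega> \<inter> ?T \<omega>' = {}" if "\<omega> \<noteq> \<omega>'" for \<omega> \<omega>'
      using that by auto
  qed (use assms in simp)
  moreover have "(\<Union>\<omega>\<in>Pow E. ?T \<omega>) = {n \<in> currents E. csrc E n = C}"
  proof (intro equalityI subsetI)
    fix n assume "n \<in> {n \<in> currents E. csrc E n = C}"
    then show "n \<in> (\<Union>\<omega>\<in>Pow E. ?T \<omega>)"
      by (intro UN_I[where a="{e \<in> E. 0 < n e}"]) auto
  qed auto
  ultimately show ?thesis by (simp add: sum_distrib_left)
qed

lemma sum_trace_weight:
  assumes "finite E"
  shows "(\<Sum>\<omega>\<in>Pow E. trace_weight E J C \<omega>) = (\<Prod>e\<in>E. cosh (J e)) * loop_Z E (\<lambda>e. tanh (J e)) C"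
proof -
  let ?P = "odd_trace_weight E J"
  have supsets: "(\<Sum>\<omega>\<in>Pow E. if \<alpha> \<subseteq> \<omega> then ?P \<alpha> \<omega> else 0)
      = (\<Prod>e\<in>E. cosh (J e)) * (\<Prod>e\<in>\<alpha>. tanh (J e))" if "\<alpha> \<subseteq> E" for \<alpha>
  proof -
    have "{\<omega> \<in> Pow E. \<alpha> \<subseteq> \<omega>} = {\<omega>. \<alpha> \<subseteq> \<omega> \<and> \<omega> \<subseteq> E}" by auto
    then have "(\<Sum>\<omega>\<in>Pow E. if \<alpha> \<subseteq> \<omega> then ?P \<alpha> \<omega> else 0) = (\<Sum>\<omega> | \<alpha> \<subseteq> \<omega> \<and> \<omega> \<subseteq> E. ?P \<alpha> \<omega>)"
      using assms by (subst sum.inter_filter[symmetric]) simp_all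
    also have "\<dots> = (\<Sum>\<omega> | \<alpha> \<subseteq> \<omega> \<and> \<omega> \<subseteq> E.
                      \<Prod>e\<in>E. if e \<in> \<omega> then (if e \<in> \<alpha> then sinh (J e) else cosh (J e) - 1) else 1)"
      unfolding odd_trace_weight_def by (intro sum.cong refl prod.cong) auto
    also have "\<dots> = (\<Prod>e\<in>E. cosh (J e) * (if e \<in> \<alpha> then tanh (J e) else 1))"
      using assms that by (subst sum_interval_prod_if) (auto simp: tanh_def intro!: prod.cong)
    also have "\<dots> = (\<Prod>e\<in>E. cosh (J e)) * (\<Prod>e\<in>\<alpha>. tanh (J e))"
      using prod.inter_restrict[OF assms, of "\<lambda>e. tanh (J e)" \<alpha>] that
      by (simp add: prod.distrib Int_absorb1)
    finally show ?thesis .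
  qed
  have "(\<Sum>\<omega>\<in>Pow E. trace_weight E J C \<omega>)
      = (\<Sum>\<alpha>\<in>Pow E. \<Sum>\<omega>\<in>Pow E. if \<alpha> \<subseteq> \<omega> \<and> bdry \<alpha> = C then ?P \<alpha> \<omega> else 0)"
    unfolding trace_weight_def by (rule sum.swap)
  also have "\<dots> = (\<Sum>\<alpha>\<in>Pow E. (\<Prod>e\<in>E. cosh (J e)) * (if bdry \<alpha> = C then \<Prod>e\<in>\<alpha>. tanh (J e) else 0))"
    using supsets by (intro sum.cong refl) auto
  also have "\<dots> = (\<Prod>e\<in>E. cosh (J e)) * loop_Z E (\<lambda>e. tanh (J e)) C"
    by (simp add: loop_Z_def sum_distrib_left)
  finally show ?thesis .
qed

lemma single_current_eq:
  assumes "finite E" "\<forall>e\<in>E. 0 \<le> J e" "\<omega> \<subseteq> E"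
  shows "single_current E J C \<omega>
       = trace_weight E J C \<omega> / ((\<Prod>e\<in>E. cosh (J e)) * loop_Z E (\<lambda>e. tanh (J e)) C)"
proof -
  have "(\<Prod>e\<in>E. exp (- J e)) \<noteq> 0"
    by (simp add: prod_pos less_imp_neq[symmetric])
  then show ?thesis
    using infsumI[OF has_sum_poisson_weight_trace[OF assms, of C]]
      infsumI[OF has_sum_poisson_weight_sources[OF assms(1,2), of C]]
    by (simp add: single_current_def sum_trace_weight[OF assms(1)])
qed

section \<open>The double random current\<close>

(* The contribution of one edge to a pair of currents: a and b say whether the edge is odd in
   each current, w whether it lies in the union of their traces, and X and Y collect the
   terms in which it does or does not lie in the first trace. *)

lemma cosh_sinh_edge_factor:
  fixes x :: real and a b w :: bool
  assumes "a \<longrightarrow> w" "b \<longrightarrow> w"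
  defines "F1 \<equiv> if a then sinh x else cosh x - 1" and "F2 \<equiv> if b then sinh x else cosh x - 1"
  defines "X \<equiv> F1 * (if b then F2 else F2 + 1)" and "Y \<equiv> if w then F2 else 1"
  shows "(if a then X else if w then X + Y else Y)
       = cosh x * cosh x * (if a \<noteq> b then tanh x else if w then (tanh x)\<^sup>2 else 1 - (tanh x)\<^sup>2)"
proof -
  define s c where "s = sinh x" and "c = cosh x"
  have c: "c \<noteq> 0" and tanh: "tanh x = s / c" by (simp_all add: s_def c_def tanh_def)
  have s: "s * s = c * c - 1"
    using cosh_square_eq[of x] by (simp add: s_def c_def power2_eq_square)
  show ?thesis
    using assms(1,2) unfolding F1_def F2_def X_def Y_def tanh s_def[symmetric] c_def[symmetric]
    by (cases a; cases b; cases w) (simp_all add: power2_eq_square field_simps c s algebra_simps)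
qed

lemma odd_trace_weight_eq_prod_if:
  assumes "\<alpha> \<subseteq> \<omega>"
  shows "odd_trace_weight E J \<alpha> \<omega>
       = (\<Prod>e\<in>E. if e \<in> \<omega> then (if e \<in> \<alpha> then sinh (J e) else cosh (J e) - 1) else 1)"
  unfolding odd_trace_weight_def using assms by (intro prod.cong) auto

lemma sum_union_odd_trace_weight_right:
  assumes "finite E" "\<alpha>2 \<subseteq> \<omega>" "\<omega> \<subseteq> E"
  shows "(\<Sum>\<omega>2\<in>Pow E. if \<omega>1 \<union> \<omega>2 = \<omega> \<and> \<alpha>1 \<subseteq> \<omega>1 \<and> \<alpha>2 \<subseteq> \<omega>2
            then odd_trace_weight E J \<alpha>1 \<omega>1 * odd_trace_weight E J \<alpha>2 \<omega>2 else 0)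
       = (if \<alpha>1 \<subseteq> \<omega>1 \<and> \<omega>1 \<subseteq> \<omega> then odd_trace_weight E J \<alpha>1 \<omega>1 *
            (\<Prod>e\<in>E. if e \<in> \<alpha>2 \<union> (\<omega> - \<omega>1) then (if e \<in> \<alpha>2 then sinh (J e) else cosh (J e) - 1)
               else if e \<in> \<omega> then (if e \<in> \<alpha>2 then sinh (J e) else cosh (J e) - 1) + 1 else 1)
          else 0)"
proof (cases "\<alpha>1 \<subseteq> \<omega>1 \<and> \<omega>1 \<subseteq> \<omega>")
  case True
  let ?F2 = "\<lambda>e. if e \<in> \<alpha>2 then sinh (J e) else cosh (J e) - 1"
  have "{\<omega>2 \<in> Pow E. \<omega>1 \<union> \<omega>2 = \<omega> \<and> \<alpha>2 \<subseteq> \<omega>2} = {\<omega>2. \<alpha>2 \<union> (\<omega> - \<omega>1) \<subseteq> \<omega>2 \<and> \<omega>2 \<subseteq> \<omega>}"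
    using assms True by auto
  then have "(\<Sum>\<omega>2\<in>Pow E. if \<omega>1 \<union> \<omega>2 = \<omega> \<and> \<alpha>2 \<subseteq> \<omega>2 then odd_trace_weight E J \<alpha>2 \<omega>2 else 0)
      = (\<Sum>\<omega>2 | \<alpha>2 \<union> (\<omega> - \<omega>1) \<subseteq> \<omega>2 \<and> \<omega>2 \<subseteq> \<omega>. odd_trace_weight E J \<alpha>2 \<omega>2)"
    using assms by (subst sum.inter_filter[symmetric]) simp_all
  also have "\<dots> = (\<Sum>\<omega>2 | \<alpha>2 \<union> (\<omega> - \<omega>1) \<subseteq> \<omega>2 \<and> \<omega>2 \<subseteq> \<omega>. \<Prod>e\<in>E. if e \<in> \<omega>2 then ?F2 e else 1)"
    by (intro sum.cong refl odd_trace_weight_eq_prod_if) auto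
  also have "\<dots> = (\<Prod>e\<in>E. if e \<in> \<alpha>2 \<union> (\<omega> - \<omega>1) then ?F2 e else if e \<in> \<omega> then ?F2 e + 1 else 1)"
    using assms by (intro sum_interval_prod_if) auto
  finally have "(\<Sum>\<omega>2\<in>Pow E. if \<omega>1 \<union> \<omega>2 = \<omega> \<and> \<alpha>2 \<subseteq> \<omega>2 then odd_trace_weight E J \<alpha>2 \<omega>2 else 0)
      = (\<Prod>e\<in>E. if e \<in> \<alpha>2 \<union> (\<omega> - \<omega>1) then ?F2 e else if e \<in> \<omega> then ?F2 e + 1 else 1)" .
  moreover have "(\<Sum>\<omega>2\<in>Pow E. if \<omega>1 \<union> \<omega>2 = \<omega> \<and> \<alpha>1 \<subseteq> \<omega>1 \<and> \<alpha>2 \<subseteq> \<omega>2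
            then odd_trace_weight E J \<alpha>1 \<omega>1 * odd_trace_weight E J \<alpha>2 \<omega>2 else 0)
      = odd_trace_weight E J \<alpha>1 \<omega>1 *
          (\<Sum>\<omega>2\<in>Pow E. if \<omega>1 \<union> \<omega>2 = \<omega> \<and> \<alpha>2 \<subseteq> \<omega>2 then odd_trace_weight E J \<alpha>2 \<omega>2 else 0)"
    unfolding sum_distrib_left using True by (intro sum.cong) auto
  ultimately show ?thesis
    using True by simp
next
  case False
  then have "(\<Sum>\<omega>2\<in>Pow E. if \<omega>1 \<union> \<omega>2 = \<omega> \<and> \<alpha>1 \<subseteq> \<omega>1 \<and> \<alpha>2 \<subseteq> \<omega>2
            then odd_trace_weight E J \<alpha>1 \<omega>1 * odd_trace_weight E J \<alpha>2 \<omega>2 else 0) = 0"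
    by (intro sum.neutral) auto
  with False show ?thesis by auto
qed

lemma sum_union_odd_trace_weight:
  assumes "finite E" "\<omega> \<subseteq> E"
  shows "(\<Sum>\<omega>1\<in>Pow E. \<Sum>\<omega>2\<in>Pow E. if \<omega>1 \<union> \<omega>2 = \<omega> \<and> \<alpha>1 \<subseteq> \<omega>1 \<and> \<alpha>2 \<subseteq> \<omega>2
             then odd_trace_weight E J \<alpha>1 \<omega>1 * odd_trace_weight E J \<alpha>2 \<omega>2 else 0)
       = (if \<alpha>1 \<subseteq> \<omega> \<and> \<alpha>2 \<subseteq> \<omega> then (\<Prod>e\<in>E. cosh (J e)) * (\<Prod>e\<in>E. cosh (J e)) *
            loop_perc_weight E (\<lambda>e. tanh (J e)) \<omega> (symd \<alpha>1 \<alpha>2) else 0)"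
proof (cases "\<alpha>1 \<subseteq> \<omega> \<and> \<alpha>2 \<subseteq> \<omega>")
  case True
  let ?F1 = "\<lambda>e. if e \<in> \<alpha>1 then sinh (J e) else cosh (J e) - 1"
  let ?F2 = "\<lambda>e. if e \<in> \<alpha>2 then sinh (J e) else cosh (J e) - 1"
  let ?R = "\<lambda>\<omega>1. \<Prod>e\<in>E. if e \<in> \<alpha>2 \<union> (\<omega> - \<omega>1) then ?F2 e else if e \<in> \<omega> then ?F2 e + 1 else 1"
  let ?X = "\<lambda>e. ?F1 e * (if e \<in> \<alpha>2 then ?F2 e else ?F2 e + 1)"
  let ?Y = "\<lambda>e. if e \<in> \<omega> then ?F2 e else 1"
  have "{\<omega>1 \<in> Pow E. \<alpha>1 \<subseteq> \<omega>1 \<and> \<omega>1 \<subseteq> \<omega>} = {\<omega>1. \<alpha>1 \<subseteq> \<omega>1 \<and> \<omega>1 \<subseteq> \<omega>}"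
    using assms by auto
  then have "(\<Sum>\<omega>1\<in>Pow E. \<Sum>\<omega>2\<in>Pow E. if \<omega>1 \<union> \<omega>2 = \<omega> \<and> \<alpha>1 \<subseteq> \<omega>1 \<and> \<alpha>2 \<subseteq> \<omega>2
             then odd_trace_weight E J \<alpha>1 \<omega>1 * odd_trace_weight E J \<alpha>2 \<omega>2 else 0)
      = (\<Sum>\<omega>1 | \<alpha>1 \<subseteq> \<omega>1 \<and> \<omega>1 \<subseteq> \<omega>. odd_trace_weight E J \<alpha>1 \<omega>1 * ?R \<omega>1)"
    unfolding sum_union_odd_trace_weight_right[OF assms(1) conjunct2[OF True] assms(2)]
    using assms(1) by (subst sum.inter_filter[symmetric]) simp_all
  also have "\<dots> = (\<Sum>\<omega>1 | \<alpha>1 \<subseteq> \<omega>1 \<and> \<omega>1 \<subseteq> \<omega>. \<Prod>e\<in>E. if e \<in> \<omega>1 then ?X e else ?Y e)"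
    using True
    by (intro sum.cong refl) (auto simp: odd_trace_weight_eq_prod_if prod.distrib[symmetric] intro!: prod.cong)
  also have "\<dots> = (\<Prod>e\<in>E. if e \<in> \<alpha>1 then ?X e else if e \<in> \<omega> then ?X e + ?Y e else ?Y e)"
    using assms True by (intro sum_interval_prod_if) auto
  also have "\<dots> = (\<Prod>e\<in>E. cosh (J e) * cosh (J e) * (if e \<in> symd \<alpha>1 \<alpha>2 then tanh (J e)
                    else if e \<in> \<omega> then (tanh (J e))\<^sup>2 else 1 - (tanh (J e))\<^sup>2))"
    using True unfolding mem_symd by (intro prod.cong refl cosh_sinh_edge_factor) auto
  finally show ?thesis
    using True by (simp add: loop_perc_weight_def prod.distrib)
next
  case False
  then have "(\<Sum>\<omega>1\<in>Pow E. \<Sum>\<omega>2\<in>Pow E. if \<omega>1 \<union> \<omega>2 = \<omega> \<and> \<alpha>1 \<subseteq> \<omega>1 \<and> \<alpha>2 \<subseteq> \<omega>2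
             then odd_trace_weight E J \<alpha>1 \<omega>1 * odd_trace_weight E J \<alpha>2 \<omega>2 else 0) = 0"
    by (intro sum.neutral ballI) auto
  with False show ?thesis by auto
qed

lemma sum_swap_inner_outer:
  "(\<Sum>x\<in>X. \<Sum>y\<in>Y. \<Sum>z\<in>Z. \<Sum>w\<in>W. f x y z w) = (\<Sum>z\<in>Z. \<Sum>w\<in>W. \<Sum>x\<in>X. \<Sum>y\<in>Y. f x y z w)"
proof -
  have "(\<Sum>x\<in>X. \<Sum>y\<in>Y. \<Sum>z\<in>Z. \<Sum>w\<in>W. f x y z w) = (\<Sum>x\<in>X. \<Sum>z\<in>Z. \<Sum>w\<in>W. \<Sum>y\<in>Y. f x y z w)"
    by (intro sum.cong refl) (simp add: sum.swap[of _ Y] sum.swap[of _ Y W])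
  also have "\<dots> = (\<Sum>z\<in>Z. \<Sum>w\<in>W. \<Sum>x\<in>X. \<Sum>y\<in>Y. f x y z w)"
    by (simp add: sum.swap[of _ X Z] sum.swap[of _ X W])
  finally show ?thesis .
qed

lemma trace_weight_mult_eq_sum:
  "(if \<omega>1 \<union> \<omega>2 = \<omega> then trace_weight E J A \<omega>1 * trace_weight E J B \<omega>2 else 0)
   = (\<Sum>\<alpha>1\<in>Pow E. \<Sum>\<alpha>2\<in>Pow E. if bdry \<alpha>1 = A \<and> bdry \<alpha>2 = B
        then (if \<omega>1 \<union> \<omega>2 = \<omega> \<and> \<alpha>1 \<subseteq> \<omega>1 \<and> \<alpha>2 \<subseteq> \<omega>2
              then odd_trace_weight E J \<alpha>1 \<omega>1 * odd_trace_weight E J \<alpha>2 \<omega>2 else 0)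
        else 0)" (is "_ = ?rhs")
proof (cases "\<omega>1 \<union> \<omega>2 = \<omega>")
  case True
  then show ?thesis
    unfolding if_P[OF True] trace_weight_def sum_product by (intro sum.cong refl) auto
next
  case False
  then have "?rhs = 0" by (intro sum.neutral ballI) auto
  with False show ?thesis by simp
qed

lemma sum_union_trace_weight:
  assumes "finite E" "\<omega> \<subseteq> E"
  shows "(\<Sum>\<omega>1\<in>Pow E. \<Sum>\<omega>2\<in>Pow E. if \<omega>1 \<union> \<omega>2 = \<omega> then trace_weight E J A \<omega>1 * trace_weight E J B \<omega>2 else 0)
       = (\<Prod>e\<in>E. cosh (J e)) * (\<Prod>e\<in>E. cosh (J e)) *
         (real (card (fsub A \<omega>)) * loop_perc_sum E (\<lambda>e. tanh (J e)) (symd A B) \<omega>)"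
proof -
  let ?cc = "(\<Prod>e\<in>E. cosh (J e)) * (\<Prod>e\<in>E. cosh (J e))"
  let ?T = "\<lambda>\<omega>1 \<omega>2 \<alpha>1 \<alpha>2. if \<omega>1 \<union> \<omega>2 = \<omega> \<and> \<alpha>1 \<subseteq> \<omega>1 \<and> \<alpha>2 \<subseteq> \<omega>2
      then odd_trace_weight E J \<alpha>1 \<omega>1 * odd_trace_weight E J \<alpha>2 \<omega>2 else 0"
  have pair: "(\<Sum>\<omega>1\<in>Pow E. \<Sum>\<omega>2\<in>Pow E. if bdry \<alpha>1 = A \<and> bdry \<alpha>2 = B then ?T \<omega>1 \<omega>2 \<alpha>1 \<alpha>2 else 0)
      = (if \<alpha>1 \<subseteq> \<omega> \<and> bdry \<alpha>1 = A \<and> \<alpha>2 \<subseteq> \<omega> \<and> bdry \<alpha>2 = B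
         then ?cc * loop_perc_weight E (\<lambda>e. tanh (J e)) \<omega> (symd \<alpha>1 \<alpha>2) else 0)" for \<alpha>1 \<alpha>2
  proof (cases "bdry \<alpha>1 = A \<and> bdry \<alpha>2 = B")
    case True
    then show ?thesis by (simp add: sum_union_odd_trace_weight[OF assms])
  next
    case False
    show ?thesis unfolding if_not_P[OF False] using False by auto
  qed
  have "(\<Sum>\<omega>1\<in>Pow E. \<Sum>\<omega>2\<in>Pow E. if \<omega>1 \<union> \<omega>2 = \<omega> then trace_weight E J A \<omega>1 * trace_weight E J B \<omega>2 else 0)
      = (\<Sum>\<omega>1\<in>Pow E. \<Sum>\<omega>2\<in>Pow E. \<Sum>\<alpha>1\<in>Pow E. \<Sum>\<alpha>2\<in>Pow E.
           if bdry \<alpha>1 = A \<and> bdry \<alpha>2 = B then ?T \<omega>1 \<omega>2 \<alpha>1 \<alpha>2 else 0)"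
    unfolding trace_weight_mult_eq_sum ..
  also have "\<dots> = (\<Sum>\<alpha>1\<in>Pow E. \<Sum>\<alpha>2\<in>Pow E. if \<alpha>1 \<subseteq> \<omega> \<and> bdry \<alpha>1 = A \<and> \<alpha>2 \<subseteq> \<omega> \<and> bdry \<alpha>2 = B
         then ?cc * loop_perc_weight E (\<lambda>e. tanh (J e)) \<omega> (symd \<alpha>1 \<alpha>2) else 0)"
    unfolding sum_swap_inner_outer pair ..
  also have "\<dots> = (\<Sum>\<alpha>1\<in>Pow E. if \<alpha>1 \<subseteq> \<omega> \<and> bdry \<alpha>1 = A
         then ?cc * loop_perc_sum E (\<lambda>e. tanh (J e)) (symd A B) \<omega> else 0)"
    using assms by (simp add: sum_loop_perc_weight_symd)
  also have "\<dots> = ?cc * (real (card (fsub A \<omega>)) * loop_perc_sum E (\<lambda>e. tanh (J e)) (symd A B) \<omega>)"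
  proof -
    have "fsub A \<omega> = {\<alpha>1 \<in> Pow E. \<alpha>1 \<subseteq> \<omega> \<and> bdry \<alpha>1 = A}"
      using assms(2) by (auto simp: fsub_def)
    then show ?thesis
      using assms(1) by (simp add: sum.inter_filter[symmetric])
  qed
  finally show ?thesis .
qed

lemma double_current_eq:
  assumes "finite E" "\<forall>e\<in>E. 0 \<le> J e" "\<omega> \<subseteq> E"
  shows "double_current E J A B \<omega>
       = real (card (fsub A \<omega>)) * loop_perc_sum E (\<lambda>e. tanh (J e)) (symd A B) \<omega>
         / (loop_Z E (\<lambda>e. tanh (J e)) A * loop_Z E (\<lambda>e. tanh (J e)) B)"
proof -
  let ?c = "\<Prod>e\<in>E. cosh (J e)"
  let ?Z = "loop_Z E (\<lambda>e. tanh (J e))"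
  have "?c \<noteq> 0" by (simp add: prod_pos less_imp_neq[symmetric])
  have "double_current E J A B \<omega>
      = (\<Sum>\<omega>1\<in>Pow E. \<Sum>\<omega>2\<in>Pow E. if \<omega>1 \<union> \<omega>2 = \<omega> then trace_weight E J A \<omega>1 * trace_weight E J B \<omega>2 else 0)
        / ((?c * ?c) * (?Z A * ?Z B))"
    unfolding double_current_def munion_def sum_divide_distrib
    using assms by (intro sum.cong refl) (auto simp: single_current_eq ac_simps)
  also have "\<dots> = (?c * ?c) * (real (card (fsub A \<omega>)) * loop_perc_sum E (\<lambda>e. tanh (J e)) (symd A B) \<omega>)
        / ((?c * ?c) * (?Z A * ?Z B))"
    using assms by (simp only: sum_union_trace_weight)
  finally show ?thesis
    using \<open>?c \<noteq> 0\<close> by simp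
qed

section \<open>The joint measure\<close>

lemma loop_perc_sum_symd_pos:
  assumes "finite E" "\<forall>e\<in>E. 0 < t e \<and> t e < 1" "\<omega> \<in> FF E A" "\<omega> \<in> FF E B"
  shows "0 < loop_perc_sum E t (symd A B) \<omega>"
proof -
  have "\<omega> \<subseteq> E" using assms(3) by (simp add: FF_def)
  then have "finite \<omega>" using assms(1) finite_subset by blast
  then obtain \<delta> where "\<delta> \<subseteq> \<omega>" "bdry \<delta> = symd A B"
    using ex_bdry_symd[of \<omega> A B] assms(3,4) by (auto simp: FF_def)
  with \<open>\<omega> \<subseteq> E\<close> show ?thesis
    using assms(1,2) by (intro loop_perc_sum_pos)
qed

lemma rho_unnorm_eq:
  assumes "finite E" "\<omega> \<subseteq> E"
  shows "rho_unnorm E t A B \<omega>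
       = (if \<omega> \<in> FF E A then loop_perc_sum E t (symd A B) \<omega> / loop_Z E t (symd A B) else 0)"
  using assms by (simp add: rho_unnorm_def munion_loopO1_perc)

lemma sum_rho_unnorm_pos:
  assumes "finite E" "\<forall>e\<in>E. 0 < t e \<and> t e < 1" "\<exists>F\<subseteq>E. bdry F = A" "\<exists>F\<subseteq>E. bdry F = B"
  shows "0 < (\<Sum>\<omega>\<in>Pow E. rho_unnorm E t A B \<omega>)"
proof -
  have E: "E \<in> FF E A" "E \<in> FF E B"
    using assms(3,4) by (auto simp: FF_def)
  have Z: "0 < loop_Z E t (symd A B)"
    using assms by (intro loop_Z_pos ex_bdry_symd) auto
  show ?thesis
  proof (rule sum_pos2[where i=E])
    show "0 < rho_unnorm E t A B E"
      using loop_perc_sum_symd_pos[OF assms(1,2) E] Z E by (simp add: rho_unnorm_eq[OF assms(1)])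
    show "0 \<le> rho_unnorm E t A B \<omega>" if "\<omega> \<in> Pow E" for \<omega>
      using that Z loop_perc_sum_nonneg[OF assms(2)] by (simp add: rho_unnorm_eq[OF assms(1)])
  qed (use assms in auto)
qed

lemma joint_unnorm_eq:
  assumes "finite E"
  shows "joint_unnorm E t A B \<omega> \<eta>
       = (if \<omega> \<subseteq> E \<and> \<eta> \<in> SigmaA E A \<and> \<eta> \<subseteq> \<omega>
          then loop_perc_sum E t (symd A B) \<omega> / (loop_Z E t (symd A B) *
                 (\<Sum>\<omega>'\<in>Pow E. rho_unnorm E t A B \<omega>') * real (card (SigmaA E A)))
          else 0)"
proof (cases "\<omega> \<subseteq> E \<and> \<eta> \<in> SigmaA E A \<and> \<eta> \<subseteq> \<omega>")
  case True
  then have "\<omega> \<in> FF E A" by (auto simp: FF_def SigmaA_def)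
  with True assms show ?thesis
    by (simp add: joint_unnorm_def rho_def rho_unnorm_eq gamma_def fsub_def SigmaA_def)
qed (auto simp: joint_unnorm_def fsub_def)

lemma sum_SigmaA_supsets_loop_perc_sum:
  assumes "finite E" "\<forall>e\<in>E. 0 < t e" "\<exists>F\<subseteq>E. bdry F = B"
  shows "(\<Sum>\<omega>\<in>Pow E. \<Sum>\<eta>\<in>SigmaA E A. if \<eta> \<subseteq> \<omega> then loop_perc_sum E t (symd A B) \<omega> else 0)
       = loop_Z E t A * loop_Z E t B"
proof -
  have "(\<Sum>\<omega>\<in>Pow E. \<Sum>\<eta>\<in>SigmaA E A. if \<eta> \<subseteq> \<omega> then loop_perc_sum E t (symd A B) \<omega> else 0)
      = (\<Sum>\<eta>\<in>SigmaA E A. \<Sum>\<omega>\<in>Pow E. if \<eta> \<subseteq> \<omega> then loop_perc_sum E t (symd A B) \<omega> else 0)"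
    by (rule sum.swap)
  also have "\<dots> = (\<Sum>\<eta>\<in>SigmaA E A. (\<Prod>e\<in>\<eta>. t e) * loop_Z E t B)"
    using assms by (intro sum.cong refl sum_supsets_loop_perc_sum) (auto simp: SigmaA_def)
  also have "\<dots> = loop_Z E t A * loop_Z E t B"
    using assms(1) by (simp add: loop_Z_eq_sum_SigmaA sum_distrib_right)
  finally show ?thesis .
qed

lemma jointP_eq:
  assumes "finite E" "\<forall>e\<in>E. 0 < t e \<and> t e < 1" "\<exists>F\<subseteq>E. bdry F = A" "\<exists>F\<subseteq>E. bdry F = B"
  shows "jointP E t A B \<omega> \<eta>
       = (if \<omega> \<subseteq> E \<and> \<eta> \<in> SigmaA E A \<and> \<eta> \<subseteq> \<omega>
          then loop_perc_sum E t (symd A B) \<omega> / (loop_Z E t A * loop_Z E t B) else 0)"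
proof -
  let ?W = "loop_perc_sum E t (symd A B)"
  define K where "K = loop_Z E t (symd A B) * (\<Sum>\<omega>'\<in>Pow E. rho_unnorm E t A B \<omega>') * real (card (SigmaA E A))"
  obtain F where "F \<subseteq> E" "bdry F = A" using assms(3) by blast
  then have "SigmaA E A \<noteq> {}" "finite (SigmaA E A)"
    using assms(1) by (auto simp: SigmaA_def intro: finite_subset[of _ "Pow E"])
  then have "K \<noteq> 0"
    using loop_Z_pos[OF assms(1) _ ex_bdry_symd[OF assms(1,3,4)], of t] sum_rho_unnorm_pos[OF assms]
      assms(2)
    by (simp add: K_def)
  have joint: "joint_unnorm E t A B \<omega>' \<eta>'
      = (if \<omega>' \<subseteq> E \<and> \<eta>' \<in> SigmaA E A \<and> \<eta>' \<subseteq> \<omega>' then ?W \<omega>' / K else 0)" for \<omega>' \<eta>'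
    unfolding joint_unnorm_eq[OF assms(1)] K_def ..
  have "(\<Sum>\<omega>'\<in>Pow E. \<Sum>\<eta>'\<in>SigmaA E A. joint_unnorm E t A B \<omega>' \<eta>')
      = (\<Sum>\<omega>'\<in>Pow E. \<Sum>\<eta>'\<in>SigmaA E A. if \<eta>' \<subseteq> \<omega>' then ?W \<omega>' else 0) / K"
    unfolding sum_divide_distrib joint by (intro sum.cong refl) auto
  also have "\<dots> = loop_Z E t A * loop_Z E t B / K"
    using assms by (simp add: sum_SigmaA_supsets_loop_perc_sum)
  finally show ?thesis
    using \<open>K \<noteq> 0\<close> by (simp add: jointP_def joint)
qed

lemma sum_jointP_Pow:
  assumes "finite E" "\<forall>e\<in>E. 0 < t e \<and> t e < 1" "\<exists>F\<subseteq>E. bdry F = A" "\<exists>F\<subseteq>E. bdry F = B"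
    and "\<eta> \<in> SigmaA E A"
  shows "(\<Sum>\<omega>\<in>Pow E. jointP E t A B \<omega> \<eta>) = loopO1 E t A \<eta>"
proof -
  have \<eta>: "\<eta> \<subseteq> E" "bdry \<eta> = A" using assms(5) by (auto simp: SigmaA_def)
  have "0 < loop_Z E t B" using assms(1,2,4) by (intro loop_Z_pos) auto
  have "(\<Sum>\<omega>\<in>Pow E. jointP E t A B \<omega> \<eta>)
      = (\<Sum>\<omega>\<in>Pow E. if \<eta> \<subseteq> \<omega> then loop_perc_sum E t (symd A B) \<omega> else 0) / (loop_Z E t A * loop_Z E t B)"
    unfolding sum_divide_distrib jointP_eq[OF assms(1-4)] using assms(5) by (intro sum.cong refl) auto
  also have "\<dots> = (\<Prod>e\<in>\<eta>. t e) / loop_Z E t A"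
    using assms(1,2,4) \<eta> \<open>0 < loop_Z E t B\<close> by (simp add: sum_supsets_loop_perc_sum)
  also have "\<dots> = loopO1 E t A \<eta>"
    using \<eta> by (simp add: loopO1_eq)
  finally show ?thesis .
qed

lemma sum_jointP_SigmaA:
  assumes "finite E" "\<forall>e\<in>E. 0 < t e \<and> t e < 1" "\<exists>F\<subseteq>E. bdry F = A" "\<exists>F\<subseteq>E. bdry F = B"
    and "\<omega> \<subseteq> E"
  shows "(\<Sum>\<eta>\<in>SigmaA E A. jointP E t A B \<omega> \<eta>)
       = real (card (fsub A \<omega>)) * loop_perc_sum E t (symd A B) \<omega> / (loop_Z E t A * loop_Z E t B)"
proof -
  have "fsub A \<omega> = {\<eta> \<in> SigmaA E A. \<eta> \<subseteq> \<omega>}"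
    using assms(5) by (auto simp: fsub_def SigmaA_def)
  moreover have "finite (SigmaA E A)"
    using assms(1) by (auto simp: SigmaA_def intro: finite_subset[of _ "Pow E"])
  ultimately show ?thesis
    using assms(5) by (simp add: jointP_eq[OF assms(1-4)] sum.inter_filter[symmetric])
qed

lemma jointP_conditional_Omega:
  assumes "finite E" "\<forall>e\<in>E. 0 < t e \<and> t e < 1" "\<exists>F\<subseteq>E. bdry F = A" "\<exists>F\<subseteq>E. bdry F = B"
    and "\<omega> \<in> FF E A" "\<omega> \<in> FF E B" "\<eta> \<in> SigmaA E A"
  shows "jointP E t A B \<omega> \<eta> / (\<Sum>\<eta>'\<in>SigmaA E A. jointP E t A B \<omega> \<eta>')
       = (if \<eta> \<in> fsub A \<omega> then 1 / real (card (fsub A \<omega>)) else 0)"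
proof -
  have "\<omega> \<subseteq> E" using assms(5) by (simp add: FF_def)
  have "loop_Z E t A \<noteq> 0" "loop_Z E t B \<noteq> 0"
    using assms(1-4) loop_Z_pos[of E t] by (auto simp: less_imp_neq[symmetric])
  moreover have "loop_perc_sum E t (symd A B) \<omega> \<noteq> 0"
    using loop_perc_sum_symd_pos[OF assms(1,2,5,6)] by simp
  moreover have "finite (fsub A \<omega>)"
    using assms(1) \<open>\<omega> \<subseteq> E\<close> by (auto simp: fsub_def intro: finite_subset[of _ "Pow E"])
  moreover have fsub: "\<eta> \<in> fsub A \<omega> \<longleftrightarrow> \<eta> \<subseteq> \<omega>"
    using assms(7) by (auto simp: fsub_def SigmaA_def)
  ultimately show ?thesis
    unfolding sum_jointP_SigmaA[OF assms(1-4) \<open>\<omega> \<subseteq> E\<close>] unfolding jointP_eq[OF assms(1-4)]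
    using assms(7) \<open>\<omega> \<subseteq> E\<close> card_gt_0_iff[of "fsub A \<omega>"] by auto
qed

lemma jointP_conditional_SigmaA:
  assumes "finite E" "\<forall>e\<in>E. 0 < t e \<and> t e < 1" "\<exists>F\<subseteq>E. bdry F = A" "\<exists>F\<subseteq>E. bdry F = B"
    and "\<eta> \<in> SigmaA E A" "\<omega> \<subseteq> E"
  shows "jointP E t A B \<omega> \<eta> / (\<Sum>\<omega>'\<in>Pow E. jointP E t A B \<omega>' \<eta>)
       = munion E (munion E (loopO1 E t B) (perc E (\<lambda>e. (t e)\<^sup>2))) (dirac \<eta>) \<omega>"
proof -
  have \<eta>: "\<eta> \<subseteq> E" "bdry \<eta> = A" using assms(5) by (auto simp: SigmaA_def)
  have "loop_Z E t A \<noteq> 0" "loop_Z E t B \<noteq> 0"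
    using assms(1-4) loop_Z_pos[of E t] by (auto simp: less_imp_neq[symmetric])
  moreover have "0 < (\<Prod>e\<in>\<eta>. t e)" using assms(2) \<eta> by (intro prod_pos) auto
  ultimately show ?thesis
    unfolding sum_jointP_Pow[OF assms(1-5)] unfolding jointP_eq[OF assms(1-4)] loopO1_eq[of E t A \<eta>]
    using assms(5,6) \<eta> munion_dirac[OF assms(1) \<eta>(1) assms(6)]
      loop_perc_sum_symd_eq_munion[OF assms(1) _ assms(6) \<eta>(2), of t B]
    by auto
qed

lemma jointP_eq_double_current:
  assumes "finite E" "\<forall>e\<in>E. 0 < J e" "\<exists>F\<subseteq>E. bdry F = A" "\<exists>F\<subseteq>E. bdry F = B"
    and "\<omega> \<subseteq> E" "\<eta> \<in> SigmaA E A"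
  shows "jointP E (\<lambda>e. tanh (J e)) A B \<omega> \<eta>
       = double_current E J A B \<omega> * (if \<eta> \<in> fsub A \<omega> then 1 / real (card (fsub A \<omega>)) else 0)"
proof -
  have t: "\<forall>e\<in>E. 0 < tanh (J e) \<and> tanh (J e) < 1"
    using assms(2) by (simp add: tanh_real_lt_1)
  have "finite (fsub A \<omega>)"
    using assms(1,5) by (auto simp: fsub_def intro: finite_subset[of _ "Pow E"])
  then show ?thesis
    using assms(5,6) card_gt_0_iff[of "fsub A \<omega>"] assms(2)
    by (auto simp: jointP_eq[OF assms(1) t assms(3,4)] double_current_eq[OF assms(1) _ assms(5)]
        fsub_def SigmaA_def less_imp_le)
qed

lemma sum_jointP_SigmaA_eq_double_current:
  assumes "finite E" "\<forall>e\<in>E. 0 < J e" "\<exists>F\<subseteq>E. bdry F = A" "\<exists>F\<subseteq>E. bdry F = B" "\<omega> \<subseteq> E"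
  shows "(\<Sum>\<eta>\<in>SigmaA E A. jointP E (\<lambda>e. tanh (J e)) A B \<omega> \<eta>) = double_current E J A B \<omega>"
proof -
  have "\<forall>e\<in>E. 0 < tanh (J e) \<and> tanh (J e) < 1" "\<forall>e\<in>E. 0 \<le> J e"
    using assms(2) by (simp_all add: tanh_real_lt_1 less_imp_le)
  then show ?thesis
    using assms by (simp add: sum_jointP_SigmaA double_current_eq)
qed

lemma double_current_uniform_subgraph:
  assumes "finite E" "\<forall>e\<in>E. 0 < J e" "\<exists>F\<subseteq>E. bdry F = A" "\<exists>F\<subseteq>E. bdry F = B" "\<eta> \<in> SigmaA E A"
  shows "(\<Sum>\<omega>\<in>Pow E. double_current E J A B \<omega> *
            (if \<eta> \<in> fsub A \<omega> then 1 / real (card (fsub A \<omega>)) else 0))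
       = loopO1 E (\<lambda>e. tanh (J e)) A \<eta>"
proof -
  have "\<forall>e\<in>E. 0 < tanh (J e) \<and> tanh (J e) < 1"
    using assms(2) by (simp add: tanh_real_lt_1)
  then show ?thesis
    using assms sum_jointP_Pow[of E "\<lambda>e. tanh (J e)" A B \<eta>]
    by (simp add: jointP_eq_double_current)
qed

theorem proposition2p2:
  fixes V :: "'v set" and E :: "'v set set" and J :: "'v set \<Rightarrow> real"
    and A B :: "'v set"
  assumes G: "simple_graph V E"
    and Jpos: "\<forall>e\<in>E. J e > 0"
    and AV: "A \<subseteq> V" and BV: "B \<subseteq> V"
    and evA: "even (card A)" and evB: "even (card B)"
    and Areal: "\<exists>F\<subseteq>E. bdry F = A" and Breal: "\<exists>F\<subseteq>E. bdry F = B"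
  defines "t \<equiv> (\<lambda>e. tanh (J e))"
  defines "\<P> \<equiv> jointP E t A B"
  shows
    \<comment> \<open>(a) marginal on Sigma is the loop O(1) measure with sources A\<close>
    "(\<forall>\<eta>\<in>SigmaA E A. (\<Sum>\<omega>\<in>Pow E. \<P> \<omega> \<eta>) = loopO1 E t A \<eta>)
     \<comment> \<open>(a) conditional on omega is uniform on subgraphs of omega with sources A\<close>
     \<and> (\<forall>\<omega>\<in>FF E A \<inter> FF E B. \<forall>\<eta>\<in>SigmaA E A.
          \<P> \<omega> \<eta> / (\<Sum>\<eta>'\<in>SigmaA E A. \<P> \<omega> \<eta>')
            = (if \<eta> \<in> fsub A \<omega> then 1 / real (card (fsub A \<omega>)) else 0))
     \<comment> \<open>(b) marginal on Omega is the double random current\<close>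
     \<and> (\<forall>\<omega>\<in>Pow E. (\<Sum>\<eta>\<in>SigmaA E A. \<P> \<omega> \<eta>) = double_current E J A B \<omega>)
     \<comment> \<open>(b) conditional on eta\<close>
     \<and> (\<forall>\<eta>\<in>SigmaA E A. \<forall>\<omega>\<in>Pow E.
          \<P> \<omega> \<eta> / (\<Sum>\<omega>'\<in>Pow E. \<P> \<omega>' \<eta>)
            = munion E (munion E (loopO1 E t B) (perc E (\<lambda>e. (t e)\<^sup>2))) (dirac \<eta>) \<omega>)
     \<comment> \<open>in particular: uniform A-subgraph of a double current has law loop O(1) with sources A\<close>
     \<and> (\<forall>\<eta>\<in>SigmaA E A.
          (\<Sum>\<omega>\<in>Pow E. double_current E J A B \<omega> *
              (if \<eta> \<in> fsub A \<omega> then 1 / real (card (fsub A \<omega>)) else 0))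
            = loopO1 E t A \<eta>)"
proof -
  have fin: "finite E"
    using G finite_subset[of E "Pow V"] by (auto simp: simple_graph_def)
  have tanh_J: "\<forall>e\<in>E. 0 < tanh (J e) \<and> tanh (J e) < 1"
    using Jpos by (simp add: tanh_real_lt_1)
  note hyps = fin tanh_J Areal Breal
  show ?thesis
    unfolding \<open>\<P> \<equiv> jointP E t A B\<close> \<open>t \<equiv> (\<lambda>e. tanh (J e))\<close>
    using sum_jointP_Pow[OF hyps] jointP_conditional_Omega[OF hyps]
      sum_jointP_SigmaA_eq_double_current[OF fin Jpos Areal Breal]
      jointP_conditional_SigmaA[OF hyps] double_current_uniform_subgraph[OF fin Jpos Areal Breal]
    by auto
qed

end
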